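(* Let $H_1,H_2$ be Hermitian matrices, $f_1,f_2:[0,T]\to\mathbb{R}$ twice continuously differentiable, $H(t)=f_1(t)H_1+f_2(t)H_2$, and $0<h\le T$. Writing $\|f\|$ for $\|f\|_\infty$, the one-step errors satisfy: (1) $\|U_{s,1}(h,0)-U(h,0)\|\le \alpha_{s,1}h^2+\beta_{s,1}h^3$ with $\alpha_{s,1}=\frac12\|f_1'\|\|H_1\|+\frac12\|f_2'\|\|H_2\|+\frac12\|f_1\|\|f_2\|\|[H_1,H_2]\|$ and $\beta_{s,1}=\frac16\|f_1\|\|f_2'\|\|[H_1,H_2]\|$. (2) $\|U_{g,1}(h,0)-U(h,0)\|\le\alpha_{g,1}h^2$ with $\alpha_{g,1}=\frac12\|f_1\|\|f_2\|\|[H_1,H_2]\|$. (3) $\|U_{s,2}(h,0)-U(h,0)\|\le\alpha_{s,2}h^3+\beta_{s,2}h^4+\gamma_{s,2}h^5$ with $\alpha_{s,2}=\frac{7}{24}\|f_1''\|\|H_1\|+\frac1{12}\|f_1'\|\|f_2\|\|H_1\|+\frac7{24}\|f_2''\|\|H_2\|+\frac16(\|f_1'\|\|f_2\|+\|f_1\|\|f_2'\|)\|[H_1,H_2]\|+\frac1{24}\|f_1\|^2\|f_2\|\|[H_1,[H_1,H_2]]\|+\frac1{12}\|f_1\|\|f_2\|^2\|[H_2,[H_1,H_2]]\|$, $\beta_{s,2}=\frac1{64}\|f_1'\|\|f_2'\|\|H_1\|+\big(\frac1{192}\|f_1\|\|f_2''\|+\frac1{192}\|f_1''\|\|f_2\|+\frac1{48}\|f_1'\|\|f_2'\|\big)\|[H_1,H_2]\|+\frac1{96}\|f_1\|\|f_1'\|\|f_2\|\|[H_1,[H_1,H_2]]\|+\frac1{48}\|f_1\|\|f_2\|\|f_2'\|\|[H_2,[H_1,H_2]]\|$,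 $\gamma_{s,2}=\frac1{960}\|f_1'\|^2\|f_2\|\|[H_1,[H_1,H_2]]\|+\frac1{480}\|f_1\|\|f_2'\|^2\|[H_2,[H_1,H_2]]\|$. (4) $\|U_{g,2}(h,0)-U(h,0)\|\le\alpha_{g,2}h^3$ with $\alpha_{g,2}=\big(\frac7{12}\|f_1\|\|f_2'\|+\frac{11}{24}\|f_1'\|\|f_2\|\big)\|[H_1,H_2]\|+\frac38\|f_1\|^2\|f_2\|\|[H_1,[H_1,H_2]]\|+\frac1{12}\|f_1\|\|f_2\|^2\|[H_2,[H_2,H_1]]\|$.
   Context: $\|\cdot\|$ on matrices is the operator 2-norm; $\|f\|_\infty=\sup_{t\in[0,T]}|f(t)|$. $U(t,s)$ is the exact evolution: $\partial_tU(t,s)=-\mathrm{i} H(t)U(t,s)$, $U(s,s)=I$. The Trotter steps are $U_{s,1}(t+h,t)=\exp(-\mathrm{i} f_2(t+h)H_2h)\exp(-\mathrm{i} f_1(t+h)H_1h)$; $U_{g,1}(t+h,t)=\exp(-\mathrm{i}\int_t^{t+h}f_2(s)ds\,H_2)\exp(-\mathrm{i}\int_t^{t+h}f_1(s)ds\,H_1)$; $U_{s,2}(t+h,t)=\exp(-\frac{\mathrm{i} h}{2}f_1(t+h/2)H_1)\exp(-\mathrm{i} hf_2(t+h/2)H_2)\exp(-\frac{\mathrm{i} h}{2}f_1(t+h/2)H_1)$; $U_{g,2}(t+h,t)=\exp(-\mathrm{i}\int_{t+h/2}^{t+h}f_1(s)ds\,H_1)\exp(-\mathrm{i}\int_t^{t+h}f_2(s)ds\,H_2)\exp(-\mathrm{i}\int_t^{t+h/2}f_1(s)ds\,H_1)$.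 *)

theory Defs
  imports "HOL-Analysis.Analysis"
begin

type_synonym 'n cmat = "complex^'n^'n"

definition cscale :: "complex \<Rightarrow> 'n::finite cmat \<Rightarrow> 'n cmat" where
  "cscale c A = (\<chi> i j. c * A$i$j)"

definition mpow :: "'n::finite cmat \<Rightarrow> nat \<Rightarrow> 'n cmat" where
  "mpow A k = (((**) A) ^^ k) (mat 1)"

definition mexp :: "'n::finite cmat \<Rightarrow> 'n cmat" where
  "mexp A = (\<Sum>k. (1 / fact k) *\<^sub>R mpow A k)"

definition opnorm :: "'n::finite cmat \<Rightarrow> real" where
  "opnorm A = onorm (\<lambda>x. A *v x)"

definition hermitian :: "'n::finite cmat \<Rightarrow> bool" where
  "hermitian A \<longleftrightarrow> (\<forall>i j. A$i$j = cnj (A$j$i))"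

definition comm :: "'n::finite cmat \<Rightarrow> 'n cmat \<Rightarrow> 'n cmat" where
  "comm A B = A ** B - B ** A"

definition supn :: "real \<Rightarrow> (real \<Rightarrow> real) \<Rightarrow> real" where
  "supn T g = (SUP t\<in>{0..T}. \<bar>g t\<bar>)"

definition Ham :: "(real \<Rightarrow> real) \<Rightarrow> (real \<Rightarrow> real) \<Rightarrow> 'n::finite cmat \<Rightarrow> 'n cmat \<Rightarrow> real \<Rightarrow> 'n cmat" where
  "Ham f1 f2 H1 H2 t = cscale (complex_of_real (f1 t)) H1 + cscale (complex_of_real (f2 t)) H2"

definition eprop :: "real \<Rightarrow> 'n::finite cmat \<Rightarrow> 'n cmat" where
  "eprop a H = mexp (cscale (- \<i> * complex_of_real a) H)"

definition Us1 :: "(real \<Rightarrow> real) \<Rightarrow> (real \<Rightarrow> real) \<Rightarrow> 'n::finite cmat \<Rightarrow> 'n cmat \<Rightarrow> real \<Rightarrow> real \<Rightarrow> 'n cmat" where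
  "Us1 f1 f2 H1 H2 t h = eprop (f2 (t+h) * h) H2 ** eprop (f1 (t+h) * h) H1"

definition Ug1 :: "(real \<Rightarrow> real) \<Rightarrow> (real \<Rightarrow> real) \<Rightarrow> 'n::finite cmat \<Rightarrow> 'n cmat \<Rightarrow> real \<Rightarrow> real \<Rightarrow> 'n cmat" where
  "Ug1 f1 f2 H1 H2 t h = eprop (integral {t..t+h} f2) H2 ** eprop (integral {t..t+h} f1) H1"

definition Us2 :: "(real \<Rightarrow> real) \<Rightarrow> (real \<Rightarrow> real) \<Rightarrow> 'n::finite cmat \<Rightarrow> 'n cmat \<Rightarrow> real \<Rightarrow> real \<Rightarrow> 'n cmat" where
  "Us2 f1 f2 H1 H2 t h =
     eprop (h/2 * f1 (t + h/2)) H1 ** eprop (h * f2 (t + h/2)) H2 ** eprop (h/2 * f1 (t + h/2)) H1"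

definition Ug2 :: "(real \<Rightarrow> real) \<Rightarrow> (real \<Rightarrow> real) \<Rightarrow> 'n::finite cmat \<Rightarrow> 'n cmat \<Rightarrow> real \<Rightarrow> real \<Rightarrow> 'n cmat" where
  "Ug2 f1 f2 H1 H2 t h =
     eprop (integral {t+h/2..t+h} f1) H1 ** eprop (integral {t..t+h} f2) H2
       ** eprop (integral {t..t+h/2} f1) H1"

end

theory Submission
  imports Defs
begin

text \<open>Each Trotter step is the value at \<open>t = h\<close> of a product \<open>V(t)\<close> of exponentials of the
generators \<open>A = -iH\<^sub>1\<close>, \<open>B = -iH\<^sub>2\<close> with \<open>t\<close> in place of \<open>h\<close>. Thus \<open>V(0) = 1\<close> and
\<open>V' = G V\<close>, where \<open>G\<close> is obtained by moving the exponents past each other with the conjugation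
\<open>Ad X s Y = e\<^sup>s\<^sup>X Y e\<^sup>-\<^sup>s\<^sup>X\<close>. Since \<open>A\<close> and \<open>B\<close> are anti-Hermitian, all these exponentials
are unitary, and a Duhamel estimate against the exact propagator (\<open>U' = L U\<close>,
\<open>L = f\<^sub>1 A + f\<^sub>2 B\<close>) gives \<open>\<parallel>V(h) - U(h)\<parallel> \<le> \<integral>\<^sub>0\<^sup>h \<parallel>G(t) - L(t)\<parallel> dt\<close>.
The defect \<open>G - L\<close> is expanded using
\<open>\<parallel>Ad X s Y - Y\<parallel> \<le> \<bar>s\<bar> \<parallel>[X,Y]\<parallel>\<close> and \<open>\<parallel>Ad X s Y - Y - s [X,Y]\<parallel> \<le> s\<^sup>2/2 \<parallel>[X,[X,Y]]\<parallel>\<close>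
together with first-order Taylor bounds for \<open>f\<^sub>1\<close>, \<open>f\<^sub>2\<close> and their integrals: it is \<open>O(t)\<close> for the
first-order steps and \<open>O(t\<^sup>2)\<close> for the symmetric ones, with constants at most the stated ones.\<close>

section \<open>Calculus on an interval\<close>

lemma norm_diff_le_of_derivative_bound:
  fixes F :: "real \<Rightarrow> 'a::banach"
  assumes "x \<le> y"
    and F: "\<And>t. t \<in> {x..y} \<Longrightarrow> (F has_vector_derivative F' t) (at t within {x..y})"
    and g: "\<And>t. t \<in> {x..y} \<Longrightarrow> (g has_real_derivative g' t) (at t within {x..y})"
    and bound: "\<And>t. t \<in> {x..y} \<Longrightarrow> norm (F' t) \<le> g' t"
  shows "norm (F y - F x) \<le> g y - g x"
proof -
  have F': "(F' has_integral F y - F x) {x..y}"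
    by (rule fundamental_theorem_of_calculus[OF \<open>x \<le> y\<close> F])
  have g': "(g' has_integral g y - g x) {x..y}"
    by (rule fundamental_theorem_of_calculus[OF \<open>x \<le> y\<close>])
      (use g in \<open>simp add: has_real_derivative_iff_has_vector_derivative\<close>)
  from integral_norm_bound_integral[OF has_integral_integrable[OF F'] has_integral_integrable[OF g'] bound]
  show ?thesis using F' g' by (simp add: integral_unique)
qed

lemma taylor_linear_remainder_le:
  fixes f f' :: "real \<Rightarrow> real"
  assumes "x \<le> y" and "c = x \<or> c = y" and "{x..y} \<subseteq> S"
    and f: "\<And>s. s \<in> S \<Longrightarrow> (f has_real_derivative f' s) (at s within S)"
    and lipschitz: "\<And>s. s \<in> S \<Longrightarrow> \<bar>f' s - f' c\<bar> \<le> M * \<bar>s - c\<bar>"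
  shows "\<bar>f y - f x - (y - x) * f' c\<bar> \<le> M * (y - x)\<^sup>2 / 2"
proof -
  let ?F = "\<lambda>s. f s - s * f' c"
  have lip: "\<bar>f' s - f' c\<bar> \<le> M * \<bar>s - c\<bar>" if "s \<in> {x..y}" for s
    using that \<open>{x..y} \<subseteq> S\<close> lipschitz by blast
  have F: "(?F has_vector_derivative f' s - f' c) (at s within {x..y})" if "s \<in> {x..y}" for s
    using that \<open>{x..y} \<subseteq> S\<close> unfolding has_real_derivative_iff_has_vector_derivative[symmetric]
    by (auto intro!: derivative_eq_intros DERIV_subset[OF f])
  from \<open>c = x \<or> c = y\<close> have "norm (?F y - ?F x) \<le> M * (y - x)\<^sup>2 / 2"
  proof
    assume "c = x"
    have "norm (?F y - ?F x) \<le> M * (y - c)\<^sup>2 / 2 - M * (x - c)\<^sup>2 / 2"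
      by (rule norm_diff_le_of_derivative_bound[OF \<open>x \<le> y\<close> F, where g'="\<lambda>s. M * (s - c)"])
        (use \<open>c = x\<close> lip in \<open>auto intro!: derivative_eq_intros\<close>)
    with \<open>c = x\<close> show ?thesis by simp
  next
    assume "c = y"
    have "norm (?F y - ?F x) \<le> - M * (c - y)\<^sup>2 / 2 - (- M * (c - x)\<^sup>2 / 2)"
      by (rule norm_diff_le_of_derivative_bound[OF \<open>x \<le> y\<close> F, where g'="\<lambda>s. M * (c - s)"])
        (use \<open>c = y\<close> lip in \<open>auto intro!: derivative_eq_intros simp: abs_minus_commute field_simps\<close>)
    with \<open>c = y\<close> show ?thesis by (simp add: power2_commute)
  qed
  then show ?thesis by (simp add: algebra_simps)
qed

lemma taylor_half_le:
  fixes f f' f'' :: "real \<Rightarrow> real"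
  assumes f: "\<And>s. s \<in> {0..h} \<Longrightarrow> (f has_real_derivative f' s) (at s within {0..h})"
    and f': "\<And>s. s \<in> {0..h} \<Longrightarrow> (f' has_real_derivative f'' s) (at s within {0..h})"
    and f'': "\<And>s. s \<in> {0..h} \<Longrightarrow> \<bar>f'' s\<bar> \<le> M"
    and t: "t \<in> {0..h}"
  shows "\<bar>f t - f (t / 2) - t / 2 * f' (t / 2)\<bar> \<le> M * t\<^sup>2 / 8"
proof -
  have "\<bar>f' s - f' (t / 2)\<bar> \<le> M * \<bar>s - t / 2\<bar>" if "s \<in> {0..h}" for s
    using field_differentiable_bound[OF convex_real_interval(5) f' f''[folded real_norm_def], of s "t / 2"] that t
    by simp
  then have "\<bar>f t - f (t / 2) - (t - t / 2) * f' (t / 2)\<bar> \<le> M * (t - t / 2)\<^sup>2 / 2"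
    using t by (intro taylor_linear_remainder_le[OF _ _ _ f]) auto
  then show ?thesis by (simp add: power2_eq_square field_simps)
qed

lemma abs_mult_power2_le:
  fixes c x :: real
  assumes "\<bar>c\<bar> \<le> C" and "\<bar>x\<bar> \<le> X"
  shows "\<bar>c\<bar> * x\<^sup>2 \<le> C * X\<^sup>2"
proof -
  have "x\<^sup>2 \<le> X\<^sup>2"
    using assms(2) by (simp add: power2_le_iff_abs_le order_trans[OF abs_ge_zero])
  with assms(1) show ?thesis
    by (intro mult_mono) auto
qed

lemma has_real_derivative_at_half:
  assumes "(f has_real_derivative D) (at (t / 2) within {0..h})" and "t \<in> {0..h}"
  shows "((\<lambda>t. f (t / 2)) has_real_derivative D / 2) (at t within {0..h})"
proof -
  have "(\<lambda>t. t / 2) ` {0..h} \<subseteq> {0..h}" by auto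
  with assms(1) have "(f has_real_derivative D) (at (t / 2) within (\<lambda>t. t / 2) ` {0..h})"
    by (rule DERIV_subset)
  moreover have "((\<lambda>t. t / 2) has_real_derivative 1 / 2) (at t within {0..h})"
    by (auto intro!: derivative_eq_intros)
  ultimately show ?thesis
    using DERIV_image_chain by (fastforce simp: o_def)
qed

lemma has_real_derivative_sqrt_norm_power2_add:
  fixes y :: "real \<Rightarrow> 'a::real_inner"
  assumes y: "(y has_vector_derivative y') (at t within S)" and "0 < e"
  shows "((\<lambda>t. sqrt ((norm (y t))\<^sup>2 + e\<^sup>2)) has_real_derivative
    inner (y t) y' / sqrt ((norm (y t))\<^sup>2 + e\<^sup>2)) (at t within S)"
proof -
  let ?q = "sqrt ((norm (y t))\<^sup>2 + e\<^sup>2)"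
  have "((\<lambda>t. (norm (y t))\<^sup>2 + e\<^sup>2) has_real_derivative 2 * inner (y t) y') (at t within S)"
    using bounded_bilinear.has_vector_derivative[OF bounded_bilinear_inner y y]
    by (auto simp: power2_norm_eq_inner inner_commute has_real_derivative_iff_has_vector_derivative
        intro!: derivative_eq_intros)
  from DERIV_chain2[OF DERIV_real_sqrt this]
  have "((\<lambda>t. sqrt ((norm (y t))\<^sup>2 + e\<^sup>2)) has_real_derivative inverse ?q / 2 * (2 * inner (y t) y'))
      (at t within S)"
    using \<open>0 < e\<close> by (simp add: add_nonneg_pos)
  moreover have "inverse ?q / 2 * (2 * inner (y t) y') = inner (y t) y' / ?q"
    by (simp add: field_simps)
  ultimately show ?thesis by (simp only:)
qed

lemma norm_le_of_inner_derivative_le: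
  fixes y :: "real \<Rightarrow> 'a::real_inner"
  assumes "a \<le> b"
    and y: "\<And>t. t \<in> {a..b} \<Longrightarrow> (y has_vector_derivative y' t) (at t within {a..b})"
    and g: "\<And>t. t \<in> {a..b} \<Longrightarrow> (g has_real_derivative g' t) (at t within {a..b})"
    and g'_nonneg: "\<And>t. t \<in> {a..b} \<Longrightarrow> 0 \<le> g' t"
    and growth: "\<And>t. t \<in> {a..b} \<Longrightarrow> inner (y t) (y' t) \<le> norm (y t) * g' t"
  shows "norm (y b) \<le> norm (y a) + (g b - g a)"
proof -
  have "norm (y b) \<le> norm (y a) + (g b - g a) + e" if e: "0 < e" for e
  proof -
    define q where "q t = sqrt ((norm (y t))\<^sup>2 + e\<^sup>2)" for t
    have q_pos: "0 < q t" and norm_le_q: "norm (y t) \<le> q t" for t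
      using e by (simp_all add: q_def add_nonneg_pos)
    define \<psi>' where "\<psi>' t = inner (y t) (y' t) / q t - g' t" for t
    have "((\<lambda>t. q t - g t) has_real_derivative \<psi>' t) (at t within {a..b})" if t: "t \<in> {a..b}" for t
      unfolding q_def[abs_def] \<psi>'_def
      by (rule DERIV_diff[OF has_real_derivative_sqrt_norm_power2_add[OF y[OF t] e] g[OF t]])
    then obtain t where "t \<in> {a..b}" "(q b - g b) - (q a - g a) = \<psi>' t * (b - a)"
      using mvt_very_simple[OF \<open>a \<le> b\<close>, of "\<lambda>t. q t - g t" "\<lambda>t d. \<psi>' t * d"]
      by (auto simp: has_field_derivative_def)
    moreover have "\<psi>' t \<le> 0"
    proof -
      have "inner (y t) (y' t) \<le> q t * g' t"
        using growth[OF \<open>t \<in> {a..b}\<close>] mult_right_mono[OF norm_le_q[of t] g'_nonneg[OF \<open>t \<in> {a..b}\<close>]]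
        by linarith
      then show ?thesis using q_pos[of t] by (simp add: \<psi>'_def pos_divide_le_eq mult.commute)
    qed
    ultimately have "q b - g b \<le> q a - g a"
      using mult_nonpos_nonneg[of "\<psi>' t" "b - a"] \<open>a \<le> b\<close> by simp
    moreover have "q a \<le> norm (y a) + e"
      unfolding q_def by (rule order_trans[OF sqrt_add_le_add_sqrt]) (use e in simp_all)
    ultimately show ?thesis using norm_le_q[of b] by linarith
  qed
  then show ?thesis by (rule field_le_epsilon)
qed

section \<open>Conjugation by exponentials in a Banach algebra\<close>

definition commutator :: "'a::ring \<Rightarrow> 'a \<Rightarrow> 'a" where
  "commutator X Y = X * Y - Y * X"

lemma commutator_swap: "commutator Y X = - commutator X Y"
  by (simp add: commutator_def)

lemma commutator_uminus_left: "commutator (- X) Y = - commutator X Y"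
  and commutator_uminus_right: "commutator X (- Y) = - commutator X Y"
  by (simp_all add: commutator_def)

lemma norm_commutator_swap: "norm (commutator Y X) = norm (commutator X (Y::'a::real_normed_algebra))"
  by (metis commutator_swap norm_minus_cancel)

lemma norm_commutator_commutator_swap:
  "norm (commutator X (commutator Z Y)) = norm (commutator X (commutator Y (Z::'a::real_normed_algebra)))"
  by (metis commutator_swap commutator_uminus_right norm_minus_cancel)

definition Ad :: "'a::{real_normed_algebra_1,banach} \<Rightarrow> real \<Rightarrow> 'a \<Rightarrow> 'a" where
  "Ad X s Y = exp (s *\<^sub>R X) * Y * exp (- (s *\<^sub>R X))"

definition contraction_generator :: "'a::{real_normed_algebra_1,banach} \<Rightarrow> bool" where
  "contraction_generator X \<longleftrightarrow> (\<forall>s. norm (exp (s *\<^sub>R X)) \<le> 1)"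

lemma Ad_0 [simp]: "Ad X 0 Y = Y"
  by (simp add: Ad_def)

lemma Ad_uminus_generator: "Ad (- X) (- s) Y = Ad X s Y"
  by (simp add: Ad_def)

lemma Ad_linear:
  "Ad X s (Y + Z) = Ad X s Y + Ad X s Z" "Ad X s (Y - Z) = Ad X s Y - Ad X s Z"
  "Ad X s (- Y) = - Ad X s Y" "Ad X s (r *\<^sub>R Y) = r *\<^sub>R Ad X s Y"
  by (simp_all add: Ad_def algebra_simps)

lemma Ad_self: "Ad X s X = X"
proof -
  have "Ad X s X = X * (exp (s *\<^sub>R X) * exp (- (s *\<^sub>R X)))"
    by (simp only: Ad_def exp_times_scaleR_commute mult.assoc)
  then show ?thesis by (simp only: exp_minus_inverse mult_1_right)
qed

lemma exp_mult_eq_Ad_mult: "exp (s *\<^sub>R X) * Y = Ad X s Y * exp (s *\<^sub>R X)"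
proof -
  have "exp (- (s *\<^sub>R X)) * exp (s *\<^sub>R X) = 1"
    using exp_minus_inverse[of "- (s *\<^sub>R X)"] by simp
  then show ?thesis by (simp add: Ad_def mult.assoc)
qed

lemma contraction_generator_uminus: "contraction_generator X \<Longrightarrow> contraction_generator (- X)"
  unfolding contraction_generator_def by (metis scaleR_minus_left scaleR_minus_right)

lemma norm_exp_le_1: "contraction_generator X \<Longrightarrow> norm (exp (s *\<^sub>R X)) \<le> 1"
  by (simp add: contraction_generator_def)

lemma norm_Ad_le:
  assumes "contraction_generator X"
  shows "norm (Ad X s Y) \<le> norm Y"
proof -
  have "norm (Ad X s Y) \<le> norm (exp (s *\<^sub>R X) * Y) * norm (exp ((- s) *\<^sub>R X))"
    unfolding Ad_def scaleR_minus_left by (rule norm_mult_ineq)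
  also have "\<dots> \<le> norm (exp (s *\<^sub>R X) * Y)"
    using norm_exp_le_1[OF assms] by (simp add: mult_left_le flip: scaleR_minus_left)
  also have "\<dots> \<le> norm (exp (s *\<^sub>R X)) * norm Y"
    by (rule norm_mult_ineq)
  also have "\<dots> \<le> norm Y"
    using norm_exp_le_1[OF assms] by (simp add: mult_left_le_one_le)
  finally show ?thesis .
qed

lemma norm_mult_exp_le:
  assumes "contraction_generator X"
  shows "norm (M * exp (s *\<^sub>R X)) \<le> norm M"
  using norm_mult_ineq[of M] mult_left_le[OF norm_exp_le_1[OF assms] norm_ge_zero] by (rule order_trans)

lemma Ad_has_vector_derivative:
  "((\<lambda>s. Ad X s Y) has_vector_derivative Ad X s (commutator X Y)) (at s within S)"
proof -
  let ?E = "exp (s *\<^sub>R X)" and ?E' = "exp (s *\<^sub>R (- X))"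
  have "((\<lambda>s. exp (s *\<^sub>R X) * Y * exp (s *\<^sub>R (- X))) has_vector_derivative
      ?E * Y * (?E' * (- X)) + ?E * X * Y * ?E') (at s within S)"
    by (intro has_vector_derivative_mult has_vector_derivative_mult_left exp_scaleR_has_vector_derivative_right)
  moreover have "?E * Y * (?E' * (- X)) + ?E * X * Y * ?E' = Ad X s (commutator X Y)"
  proof -
    have "?E' * (- X) = - (X * exp (- (s *\<^sub>R X)))"
      using exp_times_scaleR_commute[of s "- X"] by simp
    then show ?thesis by (simp add: Ad_def commutator_def algebra_simps)
  qed
  ultimately show ?thesis
    unfolding Ad_def by simp
qed

lemma norm_Ad_sub_le:
  assumes "contraction_generator X"
  shows "norm (Ad X s Y - Y) \<le> \<bar>s\<bar> * norm (commutator X Y)"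
proof -
  \<comment> \<open>As \<open>Ad (- X) (- s) = Ad X s\<close>, it suffices to treat \<open>s \<ge> 0\<close>; the same reduction is used below.\<close>
  have nonneg: "norm (Ad X s Y - Y) \<le> s * norm (commutator X Y)"
    if "contraction_generator X" "0 \<le> s" for X s
  proof -
    have "norm (Ad X s Y - Ad X 0 Y) \<le> s * norm (commutator X Y) - 0 * norm (commutator X Y)"
      by (rule norm_diff_le_of_derivative_bound[OF \<open>0 \<le> s\<close>])
        (auto intro!: Ad_has_vector_derivative derivative_eq_intros norm_Ad_le that)
    then show ?thesis by simp
  qed
  show ?thesis
  proof (cases "0 \<le> s")
    case False
    then show ?thesis
      using nonneg[of "- X" "- s"] contraction_generator_uminus[OF assms]
      by (simp add: Ad_uminus_generator commutator_uminus_left)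
  qed (use nonneg assms in auto)
qed

lemma norm_Ad_sub_commutator_le:
  assumes "contraction_generator X"
  shows "norm (Ad X s Y - Y - s *\<^sub>R commutator X Y) \<le> s\<^sup>2 / 2 * norm (commutator X (commutator X Y))"
proof -
  have nonneg: "norm (Ad X s Y - Y - s *\<^sub>R commutator X Y) \<le> s\<^sup>2 / 2 * norm (commutator X (commutator X Y))"
    if "contraction_generator X" "0 \<le> s" for X s
  proof -
    let ?C = "commutator X Y"
    have "norm ((Ad X s Y - s *\<^sub>R ?C) - (Ad X 0 Y - 0 *\<^sub>R ?C))
        \<le> s\<^sup>2 / 2 * norm (commutator X ?C) - 0\<^sup>2 / 2 * norm (commutator X ?C)"
    proof (rule norm_diff_le_of_derivative_bound[OF \<open>0 \<le> s\<close>])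
      fix t assume "t \<in> {0..s}"
      then show "norm (Ad X t ?C - ?C) \<le> t * norm (commutator X ?C)"
        using norm_Ad_sub_le[OF that(1), of t ?C] by simp
    qed (auto intro!: Ad_has_vector_derivative derivative_eq_intros)
    then show ?thesis by (simp add: algebra_simps)
  qed
  show ?thesis
  proof (cases "0 \<le> s")
    case False
    then show ?thesis
      using nonneg[of "- X" "- s"] contraction_generator_uminus[OF assms]
      by (simp add: Ad_uminus_generator commutator_uminus_left commutator_uminus_right)
  qed (use nonneg assms in auto)
qed

lemma norm_Ad_sub_Ad_commutator_le:
  assumes "contraction_generator X"
  shows "norm (Ad X s Y - Y - s *\<^sub>R Ad X s (commutator X Y))
    \<le> s\<^sup>2 / 2 * norm (commutator X (commutator X Y))"
proof -
  have nonneg: "norm (Ad X s Y - Y - s *\<^sub>R Ad X s (commutator X Y))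
      \<le> s\<^sup>2 / 2 * norm (commutator X (commutator X Y))"
    if "contraction_generator X" "0 \<le> s" for X s
  proof -
    let ?C = "commutator X Y"
    have "norm ((Ad X s Y - s *\<^sub>R Ad X s ?C) - (Ad X 0 Y - 0 *\<^sub>R Ad X 0 ?C))
        \<le> s\<^sup>2 / 2 * norm (commutator X ?C) - 0\<^sup>2 / 2 * norm (commutator X ?C)"
    proof (rule norm_diff_le_of_derivative_bound[OF \<open>0 \<le> s\<close>])
      fix t assume "t \<in> {0..s}"
      have "((\<lambda>t. Ad X t Y - t *\<^sub>R Ad X t ?C) has_vector_derivative
          Ad X t ?C - (t *\<^sub>R Ad X t (commutator X ?C) + 1 *\<^sub>R Ad X t ?C)) (at t within {0..s})"
        by (intro Ad_has_vector_derivative derivative_intros)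
      then show "((\<lambda>t. Ad X t Y - t *\<^sub>R Ad X t ?C) has_vector_derivative
          - (t *\<^sub>R Ad X t (commutator X ?C))) (at t within {0..s})"
        by simp
      show "norm (- (t *\<^sub>R Ad X t (commutator X ?C))) \<le> t * norm (commutator X ?C)"
        using norm_Ad_le[OF that(1), of t] \<open>t \<in> {0..s}\<close> by (simp add: mult_left_mono)
    qed (auto intro!: derivative_eq_intros)
    then show ?thesis by (simp add: algebra_simps)
  qed
  show ?thesis
  proof (cases "0 \<le> s")
    case False
    then show ?thesis
      using nonneg[of "- X" "- s"] contraction_generator_uminus[OF assms]
      by (simp add: Ad_uminus_generator commutator_uminus_left commutator_uminus_right Ad_linear)
  qed (use nonneg assms in auto)
qed

lemma exp_scaleR_has_vector_derivative_chain:
  assumes "(p has_real_derivative p') (at t within S)"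
  shows "((\<lambda>t. exp (p t *\<^sub>R X)) has_vector_derivative p' *\<^sub>R (X * exp (p t *\<^sub>R X))) (at t within S)"
proof -
  have "((\<lambda>s. exp (s *\<^sub>R X)) has_vector_derivative X * exp (p t *\<^sub>R X)) (at (p t) within p ` S)"
    by (rule has_vector_derivative_at_within[OF exp_scaleR_has_vector_derivative_left])
  with assms show ?thesis
    using vector_diff_chain_within[of p p' t S "\<lambda>s. exp (s *\<^sub>R X)"]
    by (simp add: o_def has_real_derivative_iff_has_vector_derivative)
qed

lemma exp_exp_has_vector_derivative:
  assumes "(p has_real_derivative p') (at t within S)" and "(q has_real_derivative q') (at t within S)"
  shows "((\<lambda>t. exp (p t *\<^sub>R X) * exp (q t *\<^sub>R Y)) has_vector_derivative
    (p' *\<^sub>R X + q' *\<^sub>R Ad X (p t) Y) * (exp (p t *\<^sub>R X) * exp (q t *\<^sub>R Y))) (at t within S)"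
proof -
  let ?P = "exp (p t *\<^sub>R X)" and ?Q = "exp (q t *\<^sub>R Y)"
  have "((\<lambda>t. exp (p t *\<^sub>R X) * exp (q t *\<^sub>R Y)) has_vector_derivative
      ?P * (q' *\<^sub>R (Y * ?Q)) + p' *\<^sub>R (X * ?P) * ?Q) (at t within S)"
    by (intro has_vector_derivative_mult exp_scaleR_has_vector_derivative_chain assms)
  moreover have "Ad X (p t) Y * (?P * ?Q) = ?P * (Y * ?Q)"
    by (metis exp_mult_eq_Ad_mult mult.assoc)
  then have "?P * (q' *\<^sub>R (Y * ?Q)) + p' *\<^sub>R (X * ?P) * ?Q
      = (p' *\<^sub>R X + q' *\<^sub>R Ad X (p t) Y) * (?P * ?Q)"
    by (simp add: algebra_simps)
  ultimately show ?thesis by (simp only:)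
qed

lemma exp_exp_exp_has_vector_derivative:
  assumes "(p has_real_derivative p') (at t within S)" and "(q has_real_derivative q') (at t within S)"
    and "(r has_real_derivative r') (at t within S)"
  shows "((\<lambda>t. exp (p t *\<^sub>R X) * exp (q t *\<^sub>R Y) * exp (r t *\<^sub>R Z)) has_vector_derivative
    (p' *\<^sub>R X + q' *\<^sub>R Ad X (p t) Y + r' *\<^sub>R Ad X (p t) (Ad Y (q t) Z))
      * (exp (p t *\<^sub>R X) * exp (q t *\<^sub>R Y) * exp (r t *\<^sub>R Z))) (at t within S)"
proof -
  let ?P = "exp (p t *\<^sub>R X)" and ?Q = "exp (q t *\<^sub>R Y)" and ?R = "exp (r t *\<^sub>R Z)"
  let ?G = "p' *\<^sub>R X + q' *\<^sub>R Ad X (p t) Y"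
  have "((\<lambda>t. exp (p t *\<^sub>R X) * exp (q t *\<^sub>R Y) * exp (r t *\<^sub>R Z)) has_vector_derivative
      ?P * ?Q * (r' *\<^sub>R (Z * ?R)) + ?G * (?P * ?Q) * ?R) (at t within S)"
    by (intro has_vector_derivative_mult exp_exp_has_vector_derivative exp_scaleR_has_vector_derivative_chain assms)
  moreover have "Ad X (p t) (Ad Y (q t) Z) * (?P * ?Q * ?R) = ?P * ?Q * Z * ?R"
    by (metis exp_mult_eq_Ad_mult mult.assoc)
  then have "?P * ?Q * (r' *\<^sub>R (Z * ?R)) + ?G * (?P * ?Q) * ?R
      = (?G + r' *\<^sub>R Ad X (p t) (Ad Y (q t) Z)) * (?P * ?Q * ?R)"
    by (simp add: algebra_simps)
  ultimately show ?thesis by (simp only:)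
qed

lemma lie_trotter_defect_le:
  assumes "contraction_generator X"
  shows "norm ((p' *\<^sub>R X + q' *\<^sub>R Ad X p Y) - (x *\<^sub>R X + y *\<^sub>R Y))
    \<le> \<bar>p' - x\<bar> * norm X + \<bar>q' - y\<bar> * norm Y + \<bar>y\<bar> * \<bar>p\<bar> * norm (commutator X Y)"
proof -
  have "(p' *\<^sub>R X + q' *\<^sub>R Ad X p Y) - (x *\<^sub>R X + y *\<^sub>R Y)
      = (p' - x) *\<^sub>R X + (q' - y) *\<^sub>R Ad X p Y + y *\<^sub>R (Ad X p Y - Y)"
    by (simp add: algebra_simps)
  also have "norm \<dots> \<le> \<bar>p' - x\<bar> * norm X + \<bar>q' - y\<bar> * norm (Ad X p Y) + \<bar>y\<bar> * norm (Ad X p Y - Y)"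
    by (intro norm_triangle_mono order_refl) simp_all
  also have "\<dots> \<le> \<bar>p' - x\<bar> * norm X + \<bar>q' - y\<bar> * norm Y + \<bar>y\<bar> * (\<bar>p\<bar> * norm (commutator X Y))"
    by (intro add_mono order_refl mult_left_mono norm_Ad_le norm_Ad_sub_le assms abs_ge_zero)
  finally show ?thesis by (simp add: mult.assoc)
qed

text \<open>The splitting points \<open>c\<close> and \<open>d\<close> of \<open>q'\<close> and \<open>r'\<close> are free; they are chosen so that
\<open>c p - d q\<close>, the coefficient of the first-order commutator, is of higher order.\<close>

lemma strang_defect_eq:
  "(p' *\<^sub>R X + q' *\<^sub>R Ad X p Y + r' *\<^sub>R Ad X p (Ad Y q X)) - (x *\<^sub>R X + y *\<^sub>R Y)
    = (p' + r' - x) *\<^sub>R X + (q' - y) *\<^sub>R Y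
      + (q' - c) *\<^sub>R (Ad X p Y - Y) + (r' - d) *\<^sub>R Ad X p (Ad Y q X - X)
      + c *\<^sub>R (Ad X p Y - Y - p *\<^sub>R Ad X p (commutator X Y))
      + d *\<^sub>R Ad X p (Ad Y q X - X - q *\<^sub>R commutator Y X)
      + (c * p - d * q) *\<^sub>R Ad X p (commutator X Y)"
  by (simp add: Ad_linear Ad_self commutator_swap[of Y X] algebra_simps)

lemma strang_defect_le:
  assumes X: "contraction_generator X" and Y: "contraction_generator Y"
  shows "norm ((p' *\<^sub>R X + q' *\<^sub>R Ad X p Y + r' *\<^sub>R Ad X p (Ad Y q X)) - (x *\<^sub>R X + y *\<^sub>R Y))
    \<le> \<bar>p' + r' - x\<bar> * norm X + \<bar>q' - y\<bar> * norm Y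
      + (\<bar>q' - c\<bar> * \<bar>p\<bar> + \<bar>r' - d\<bar> * \<bar>q\<bar> + \<bar>c * p - d * q\<bar>) * norm (commutator X Y)
      + \<bar>c\<bar> * p\<^sup>2 / 2 * norm (commutator X (commutator X Y))
      + \<bar>d\<bar> * q\<^sup>2 / 2 * norm (commutator Y (commutator Y X))"
proof -
  let ?C = "commutator X Y"
  have n1: "norm ((p' + r' - x) *\<^sub>R X) \<le> \<bar>p' + r' - x\<bar> * norm X"
    and n2: "norm ((q' - y) *\<^sub>R Y) \<le> \<bar>q' - y\<bar> * norm Y"
    by simp_all
  have n3: "norm ((q' - c) *\<^sub>R (Ad X p Y - Y)) \<le> \<bar>q' - c\<bar> * (\<bar>p\<bar> * norm ?C)"
    by (simp add: mult_left_mono norm_Ad_sub_le[OF X])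
  have "norm (Ad X p (Ad Y q X - X)) \<le> \<bar>q\<bar> * norm ?C"
    using norm_Ad_le[OF X] norm_Ad_sub_le[OF Y, of q X] norm_commutator_swap[of Y X] order_trans
    by metis
  then have n4: "norm ((r' - d) *\<^sub>R Ad X p (Ad Y q X - X)) \<le> \<bar>r' - d\<bar> * (\<bar>q\<bar> * norm ?C)"
    by (simp add: mult_left_mono)
  have n5: "norm (c *\<^sub>R (Ad X p Y - Y - p *\<^sub>R Ad X p ?C))
      \<le> \<bar>c\<bar> * (p\<^sup>2 / 2 * norm (commutator X ?C))"
    unfolding norm_scaleR by (rule mult_left_mono[OF norm_Ad_sub_Ad_commutator_le[OF X]]) simp
  have "norm (Ad X p (Ad Y q X - X - q *\<^sub>R commutator Y X))
      \<le> q\<^sup>2 / 2 * norm (commutator Y (commutator Y X))"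
    using norm_Ad_le[OF X] norm_Ad_sub_commutator_le[OF Y] order_trans by metis
  then have n6: "norm (d *\<^sub>R Ad X p (Ad Y q X - X - q *\<^sub>R commutator Y X))
      \<le> \<bar>d\<bar> * (q\<^sup>2 / 2 * norm (commutator Y (commutator Y X)))"
    unfolding norm_scaleR by (rule mult_left_mono) simp_all
  have n7: "norm ((c * p - d * q) *\<^sub>R Ad X p ?C) \<le> \<bar>c * p - d * q\<bar> * norm ?C"
    by (simp add: mult_left_mono norm_Ad_le[OF X])
  have "norm ((p' *\<^sub>R X + q' *\<^sub>R Ad X p Y + r' *\<^sub>R Ad X p (Ad Y q X)) - (x *\<^sub>R X + y *\<^sub>R Y))
      \<le> \<bar>p' + r' - x\<bar> * norm X + \<bar>q' - y\<bar> * norm Y + \<bar>q' - c\<bar> * (\<bar>p\<bar> * norm ?C)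
        + \<bar>r' - d\<bar> * (\<bar>q\<bar> * norm ?C) + \<bar>c\<bar> * (p\<^sup>2 / 2 * norm (commutator X ?C))
        + \<bar>d\<bar> * (q\<^sup>2 / 2 * norm (commutator Y (commutator Y X))) + \<bar>c * p - d * q\<bar> * norm ?C"
    unfolding strang_defect_eq[where c = c and d = d]
    by (intro order_trans[OF norm_triangle_ineq add_mono] n1 n2 n3 n4 n5 n6 n7)
  then show ?thesis by (simp add: algebra_simps)
qed

section \<open>Complex matrices with the operator norm\<close>

lemma opnorm_mult_vec_le: "norm ((A::'n::finite cmat) *v v) \<le> opnorm A * norm v"
  unfolding opnorm_def by (rule onorm) simp

lemma opnorm_nonneg: "0 \<le> opnorm (A::'n::finite cmat)"
  unfolding opnorm_def by (rule onorm_pos_le) simp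

lemma opnorm_le: "(\<And>v. norm ((A::'n::finite cmat) *v v) \<le> c * norm v) \<Longrightarrow> opnorm A \<le> c"
  unfolding opnorm_def by (rule onorm_le)

lemma opnorm_add_le: "opnorm ((A::'n::finite cmat) + B) \<le> opnorm A + opnorm B"
  unfolding opnorm_def matrix_vector_mult_add_rdistrib by (rule onorm_triangle) simp_all

lemma scaleR_matrix_vector_mult: "((r::real) *\<^sub>R (A::'n::finite cmat)) *v v = r *\<^sub>R (A *v v)"
  by (simp add: vec_eq_iff matrix_vector_mult_def scaleR_sum_right)

lemma matrix_vector_mult_scaleR_right: "(A::'n::finite cmat) *v ((r::real) *\<^sub>R v) = r *\<^sub>R (A *v v)"
  by (simp add: vec_eq_iff matrix_vector_mult_def scaleR_sum_right)

lemma opnorm_scaleR: "opnorm ((r::real) *\<^sub>R (A::'n::finite cmat)) = \<bar>r\<bar> * opnorm A"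
  unfolding opnorm_def scaleR_matrix_vector_mult by (rule onorm_scaleR) simp

lemma opnorm_matrix_mult_le: "opnorm ((A::'n::finite cmat) ** B) \<le> opnorm A * opnorm B"
proof -
  have "(\<lambda>v. (A ** B) *v v) = (\<lambda>v. A *v v) \<circ> (\<lambda>v. B *v v)"
    by (simp add: fun_eq_iff matrix_vector_mul_assoc)
  then show ?thesis unfolding opnorm_def by (simp add: onorm_compose)
qed

lemma opnorm_mat_1: "opnorm (mat 1 :: 'n::finite cmat) = 1"
proof -
  have "(*v) (mat 1 :: 'n cmat) = (\<lambda>v. v)" by (simp add: fun_eq_iff)
  then show ?thesis unfolding opnorm_def by (simp add: onorm_id)
qed

lemma matrix_entry_eq_column: "(A::'n::finite cmat) $ i $ j = (A *v axis j 1) $ i"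
  by (simp add: matrix_vector_mult_def axis_def if_distrib cong: if_cong)

lemma opnorm_eq_0_iff: "opnorm (A::'n::finite cmat) = 0 \<longleftrightarrow> A = 0"
  unfolding opnorm_def
  by (simp add: onorm_eq_0) (metis matrix_entry_eq_column matrix_vector_mult_0 vec_eq_iff zero_index)

lemma norm_matrix_entry_le_opnorm: "norm ((A::'n::finite cmat) $ i $ j) \<le> opnorm A"
proof -
  have "norm (A $ i $ j) \<le> norm (A *v axis j 1)"
    unfolding matrix_entry_eq_column by (rule Finite_Cartesian_Product.norm_nth_le)
  also have "\<dots> \<le> opnorm A * norm (axis j (1::complex))" by (rule opnorm_mult_vec_le)
  finally show ?thesis by (simp add: norm_Basis Basis_complex_def)
qed

lemma norm_vec_le_sum: "norm (x::'a::real_normed_vector^'m::finite) \<le> (\<Sum>i\<in>UNIV. norm (x $ i))"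
  unfolding norm_vec_def by (rule L2_set_le_sum) simp

lemma norm_le_card_opnorm: "norm (A::'n::finite cmat) \<le> real CARD('n) * real CARD('n) * opnorm A"
proof -
  have "norm A \<le> (\<Sum>i\<in>UNIV. \<Sum>j\<in>UNIV. norm (A $ i $ j))"
    using norm_vec_le_sum[of A] norm_vec_le_sum[of "A $ _"] by (meson order_trans sum_mono)
  also have "\<dots> \<le> (\<Sum>i\<in>(UNIV::'n set). \<Sum>j\<in>(UNIV::'n set). opnorm A)"
    by (intro sum_mono norm_matrix_entry_le_opnorm)
  finally show ?thesis by simp
qed

lemma bilinear_matrix_vector_mult: "bilinear (\<lambda>(A::'n::finite cmat) v. A *v v)"
  by (simp add: bilinear_def linear_iff matrix_vector_mult_add_rdistrib matrix_vector_right_distrib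
      scaleR_matrix_vector_mult matrix_vector_mult_scaleR_right)

lemma opnorm_le_norm: "\<exists>K. \<forall>A::'n::finite cmat. opnorm A \<le> norm A * K"
proof -
  obtain K where K: "\<And>(A::'n cmat) v. norm (A *v v) \<le> K * norm A * norm v"
    using bilinear_bounded[OF bilinear_matrix_vector_mult] by blast
  show ?thesis
    by (rule exI[of _ K], intro allI opnorm_le) (metis K mult.commute)
qed

text \<open>Matrices normed by the operator norm form a Banach algebra, in which \<^const>\<open>mexp\<close> is the
library exponential.\<close>

typedef (overloaded) 'n opmat = "UNIV :: 'n::finite cmat set"
  by simp

instantiation opmat :: (finite) real_normed_algebra_1
begin

definition "0 = Abs_opmat 0"
definition "1 = Abs_opmat (mat 1)"
definition "X + Y = Abs_opmat (Rep_opmat X + Rep_opmat Y)"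
definition "X - Y = Abs_opmat (Rep_opmat X - Rep_opmat Y)"
definition "- X = Abs_opmat (- Rep_opmat X)"
definition "X * Y = Abs_opmat (Rep_opmat X ** Rep_opmat Y)"
definition "r *\<^sub>R X = Abs_opmat (r *\<^sub>R Rep_opmat X)"
definition "norm X = opnorm (Rep_opmat X)"
definition "sgn (X::'a opmat) = inverse (norm X) *\<^sub>R X"
definition "dist (X::'a opmat) Y = norm (X - Y)"
definition "(uniformity :: ('a opmat \<times> 'a opmat) filter) =
  (INF e\<in>{0 <..}. principal {(x, y). dist x y < e})"
definition "open (S :: 'a opmat set) = (\<forall>x\<in>S. \<forall>\<^sub>F (x', y) in uniformity. x' = x \<longrightarrow> y \<in> S)"

instance
proof
  note defs = zero_opmat_def one_opmat_def plus_opmat_def minus_opmat_def uminus_opmat_def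
    times_opmat_def scaleR_opmat_def norm_opmat_def Rep_opmat_inject[symmetric]
    Abs_opmat_inverse[OF UNIV_I] Rep_opmat_inverse
  fix X Y Z :: "'a opmat" and r s :: real
  show "X * Y * Z = X * (Y * Z)" by (simp add: defs matrix_mul_assoc)
  show "1 * X = X" "X * 1 = X" by (simp_all add: defs)
  show "(X + Y) * Z = X * Z + Y * Z"
    by (simp add: defs vec_eq_iff matrix_matrix_mult_def sum.distrib distrib_right)
  show "X * (Y + Z) = X * Y + X * Z"
    by (simp add: defs matrix_add_ldistrib)
  show "(0::'a opmat) \<noteq> 1"
    by (simp add: defs vec_eq_iff mat_def)
  show "X + Y + Z = X + (Y + Z)" "X + Y = Y + X" "0 + X = X" "- X + X = 0" "X - Y = X + - Y"
    by (simp_all add: defs algebra_simps)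
  show "r *\<^sub>R (X + Y) = r *\<^sub>R X + r *\<^sub>R Y" "(r + s) *\<^sub>R X = r *\<^sub>R X + s *\<^sub>R X"
    "r *\<^sub>R s *\<^sub>R X = (r * s) *\<^sub>R X" "1 *\<^sub>R X = X"
    by (simp_all add: defs scaleR_add_right scaleR_add_left)
  show "r *\<^sub>R X * Y = r *\<^sub>R (X * Y)" "X * r *\<^sub>R Y = r *\<^sub>R (X * Y)"
    by (simp_all add: defs vec_eq_iff matrix_matrix_mult_def scaleR_sum_right)
  show "norm (1::'a opmat) = 1" "norm (X * Y) \<le> norm X * norm Y" "norm X = 0 \<longleftrightarrow> X = 0"
    "norm (X + Y) \<le> norm X + norm Y" "norm (r *\<^sub>R X) = \<bar>r\<bar> * norm X"
    by (simp_all add: defs opnorm_mat_1 opnorm_matrix_mult_le opnorm_eq_0_iff opnorm_add_le opnorm_scaleR)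
qed (simp_all add: sgn_opmat_def dist_opmat_def uniformity_opmat_def open_opmat_def)

end

lemma Rep_opmat_simps [simp]:
  "Rep_opmat 0 = 0" "Rep_opmat 1 = mat 1"
  "Rep_opmat (X + Y) = Rep_opmat X + Rep_opmat Y" "Rep_opmat (X - Y) = Rep_opmat X - Rep_opmat Y"
  "Rep_opmat (- X) = - Rep_opmat X" "Rep_opmat (X * Y) = Rep_opmat X ** Rep_opmat Y"
  "Rep_opmat (r *\<^sub>R X) = r *\<^sub>R Rep_opmat X"
  by (simp_all add: zero_opmat_def one_opmat_def plus_opmat_def minus_opmat_def uminus_opmat_def
      times_opmat_def scaleR_opmat_def Abs_opmat_inverse)

lemma norm_opmat_eq: "norm X = opnorm (Rep_opmat X)"
  by (simp add: norm_opmat_def)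

lemma bounded_linear_Rep_opmat: "bounded_linear (Rep_opmat :: 'n::finite opmat \<Rightarrow> 'n cmat)"
  by standard (auto simp: norm_opmat_eq mult.commute intro!: exI norm_le_card_opnorm)

lemma bounded_linear_Abs_opmat: "bounded_linear (Abs_opmat :: 'n::finite cmat \<Rightarrow> 'n opmat)"
  by standard (simp_all add: Rep_opmat_inject[symmetric] Abs_opmat_inverse norm_opmat_eq opnorm_le_norm)

instance opmat :: (finite) banach
proof
  fix X :: "nat \<Rightarrow> 'a opmat"
  assume "Cauchy X"
  then have "Cauchy (\<lambda>n. Rep_opmat (X n))" by (rule bounded_linear.Cauchy[OF bounded_linear_Rep_opmat])
  then obtain L where "(\<lambda>n. Rep_opmat (X n)) \<longlonglongrightarrow> L"
    by (auto simp: convergent_eq_Cauchy[symmetric] convergent_def)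
  then have "(\<lambda>n. Abs_opmat (Rep_opmat (X n))) \<longlonglongrightarrow> Abs_opmat L"
    by (rule bounded_linear.tendsto[OF bounded_linear_Abs_opmat])
  then show "convergent X" by (auto simp: convergent_def Rep_opmat_inverse)
qed

lemma opnorm_eq_norm_Abs: "opnorm M = norm (Abs_opmat M)"
  by (simp add: norm_opmat_eq Abs_opmat_inverse)

lemma Abs_opmat_simps:
  "Abs_opmat (M - N) = Abs_opmat M - Abs_opmat N" "Abs_opmat (M ** N) = Abs_opmat M * Abs_opmat N"
  by (simp_all add: minus_opmat_def times_opmat_def Abs_opmat_inverse)

lemma Rep_opmat_power: "Rep_opmat (X ^ k) = mpow (Rep_opmat X) k"
  by (induction k) (simp_all add: mpow_def)

lemma mexp_eq_exp: "mexp (Rep_opmat X) = Rep_opmat (exp X)"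
proof -
  have "(\<lambda>k. Rep_opmat (X ^ k /\<^sub>R fact k)) sums Rep_opmat (exp X)"
    by (rule bounded_linear.sums[OF bounded_linear_Rep_opmat exp_converges])
  then show ?thesis
    unfolding mexp_def by (simp add: Rep_opmat_power divide_inverse_commute sums_iff)
qed

definition generator :: "'n::finite cmat \<Rightarrow> 'n opmat" where
  "generator H = Abs_opmat (cscale (- \<i>) H)"

lemma Rep_generator: "Rep_opmat (generator H) = cscale (- \<i>) H"
  by (simp add: generator_def Abs_opmat_inverse)

lemma eprop_eq_exp: "eprop s H = Rep_opmat (exp (s *\<^sub>R generator H))"
proof -
  have "cscale (- \<i> * complex_of_real s) H = Rep_opmat (s *\<^sub>R generator H)"
    by (simp add: Rep_generator cscale_def vec_eq_iff) (simp add: scaleR_conv_of_real)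
  then show ?thesis unfolding eprop_def by (simp only: mexp_eq_exp)
qed

lemma opnorm_cscale_unimodular:
  assumes "cmod c = 1"
  shows "opnorm (cscale c A) = opnorm A"
proof -
  have "norm (cscale c A *v v) = norm (A *v v)" for v
    using assms by (simp add: cscale_def matrix_vector_mult_def mult.assoc flip: sum_distrib_left)
      (simp add: norm_vec_def norm_mult)
  then show ?thesis unfolding opnorm_def onorm_def by simp
qed

lemma cscale_cscale: "cscale c (cscale d A) = cscale (c * d) A"
  by (simp add: cscale_def vec_eq_iff)

lemma comm_cscale_right: "comm H (cscale c A) = cscale c (comm H A)"
  by (simp add: comm_def cscale_def vec_eq_iff matrix_matrix_mult_def sum_distrib_left algebra_simps)

lemma Rep_commutator_generator: "Rep_opmat (commutator (generator H) X) = cscale (- \<i>) (comm H (Rep_opmat X))"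
  by (simp add: commutator_def comm_def Rep_generator cscale_def vec_eq_iff matrix_matrix_mult_def
      sum_distrib_left algebra_simps)

lemma norm_generator: "norm (generator H) = opnorm H"
  by (simp add: norm_opmat_eq Rep_generator opnorm_cscale_unimodular)

lemma norm_commutator_generator: "norm (commutator (generator H) (generator K)) = opnorm (comm H K)"
  by (simp add: norm_opmat_eq Rep_commutator_generator Rep_generator comm_cscale_right cscale_cscale
      opnorm_cscale_unimodular)

lemma norm_commutator_commutator_generator:
  "norm (commutator (generator H) (commutator (generator K) (generator L))) = opnorm (comm H (comm K L))"
  by (simp add: norm_opmat_eq Rep_commutator_generator Rep_generator comm_cscale_right cscale_cscale
      opnorm_cscale_unimodular norm_mult)

text \<open>The real inner product on \<open>complex^'n\<close> is the real part of the Hermitian one, so \<open>skew X\<close>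
means that \<open>X\<close> is anti-Hermitian.\<close>

definition skew :: "'n::finite opmat \<Rightarrow> bool" where
  "skew X \<longleftrightarrow> (\<forall>v. inner (Rep_opmat X *v v) v = 0)"

lemma skew_add: "skew X \<Longrightarrow> skew Y \<Longrightarrow> skew (X + Y)"
  by (simp add: skew_def matrix_vector_mult_add_rdistrib inner_add_left)

lemma skew_scaleR: "skew X \<Longrightarrow> skew (r *\<^sub>R X)"
  by (simp add: skew_def scaleR_matrix_vector_mult)

lemma skew_generator:
  fixes H :: "'n::finite cmat"
  assumes "hermitian H"
  shows "skew (generator H)"
  unfolding skew_def
proof
  fix v :: "complex^'n"
  define S where "S = (\<Sum>i\<in>UNIV. \<Sum>j\<in>UNIV. H $ i $ j * v $ j * cnj (v $ i))"
  have "cnj (H $ i $ j) = H $ j $ i" for i j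
    using assms by (metis complex_cnj_cnj hermitian_def)
  then have "cnj S = (\<Sum>i\<in>UNIV. \<Sum>j\<in>UNIV. H $ j $ i * cnj (v $ j) * v $ i)"
    by (simp add: S_def cnj_sum)
  also have "\<dots> = S"
    unfolding S_def by (subst sum.swap) (simp add: mult_ac)
  finally have "Im S = 0"
    by (metis cnj.simps(2) neg_equal_zero)
  have "inner (Rep_opmat (generator H) *v v) v
      = (\<Sum>i\<in>UNIV. inner (\<Sum>j\<in>UNIV. - \<i> * H $ i $ j * v $ j) (v $ i))"
    by (simp add: Rep_generator inner_vec_def matrix_vector_mult_def cscale_def)
  also have "\<dots> = (\<Sum>i\<in>UNIV. Re ((\<Sum>j\<in>UNIV. - \<i> * H $ i $ j * v $ j) * cnj (v $ i)))"
    by (simp only: complex_inner_1_right inner_complex_def) (simp add: algebra_simps)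
  also have "\<dots> = Re (- \<i> * S)"
    by (simp add: S_def sum_distrib_left sum_distrib_right Re_sum mult_ac)
  also have "\<dots> = 0" using \<open>Im S = 0\<close> by simp
  finally show "inner (Rep_opmat (generator H) *v v) v = 0" .
qed

lemma bounded_linear_opmat_apply: "bounded_linear (\<lambda>X::'n::finite opmat. Rep_opmat X *v v)"
  by (rule bounded_linear_compose[OF _ bounded_linear_Rep_opmat])
    (simp add: bilinear_conv_bounded_bilinear[THEN iffD1, OF bilinear_matrix_vector_mult, unfolded split_def]
      bounded_bilinear.bounded_linear_left)

lemma norm_exp_skew_le_1:
  assumes "skew X"
  shows "norm (exp X) \<le> 1"
proof -
  have "norm (Rep_opmat (exp X) *v v) \<le> 1 * norm v" for v
  proof -
    define y where "y = (\<lambda>s. Rep_opmat (exp (s *\<^sub>R X)) *v v)"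
    have dy: "(y has_vector_derivative Rep_opmat X *v y s) (at s)" for s
      using bounded_linear.has_vector_derivative[OF bounded_linear_opmat_apply
          exp_scaleR_has_vector_derivative_left]
      unfolding y_def by (simp add: matrix_vector_mul_assoc)
    have "((\<lambda>s. inner (y s) (y s)) has_real_derivative 0) (at s)" for s
      using assms bounded_bilinear.has_vector_derivative[OF bounded_bilinear_inner dy dy]
      by (simp add: skew_def inner_commute has_real_derivative_iff_has_vector_derivative)
    then have "inner (y 1) (y 1) = inner (y 0) (y 0)"
      by (metis DERIV_isconst_all)
    then show ?thesis by (simp add: y_def norm_eq_sqrt_inner)
  qed
  then show ?thesis by (simp add: norm_opmat_eq opnorm_le)
qed

lemma contraction_generator_skew: "skew X \<Longrightarrow> contraction_generator X"
  by (simp add: contraction_generator_def norm_exp_skew_le_1 skew_scaleR)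

lemma duhamel_bound:
  fixes U V L E :: "real \<Rightarrow> 'n::finite opmat"
  assumes "0 \<le> h"
    and U: "\<And>t. t \<in> {0..h} \<Longrightarrow> (U has_vector_derivative L t * U t) (at t within {0..h})"
    and V: "\<And>t. t \<in> {0..h} \<Longrightarrow> (V has_vector_derivative L t * V t + E t) (at t within {0..h})"
    and skew: "\<And>t. t \<in> {0..h} \<Longrightarrow> skew (L t)"
    and "V 0 = U 0"
    and g: "\<And>t. t \<in> {0..h} \<Longrightarrow> (g has_real_derivative g' t) (at t within {0..h})"
    and E: "\<And>t. t \<in> {0..h} \<Longrightarrow> norm (E t) \<le> g' t"
  shows "norm (V h - U h) \<le> g h - g 0"
proof -
  have "norm (Rep_opmat (V h - U h) *v v) \<le> (g h - g 0) * norm v" for v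
  proof -
    define y where "y = (\<lambda>t. Rep_opmat (V t - U t) *v v)"
    have "(y has_vector_derivative Rep_opmat (L t) *v y t + Rep_opmat (E t) *v v) (at t within {0..h})"
      if t: "t \<in> {0..h}" for t
      using bounded_linear.has_vector_derivative[OF bounded_linear_opmat_apply
          has_vector_derivative_diff[OF V[OF t] U[OF t]], of v]
      unfolding y_def by (simp add: algebra_simps matrix_vector_mult_add_rdistrib
          matrix_vector_mult_diff_rdistrib matrix_vector_mul_assoc)
    moreover have "inner (y t) (Rep_opmat (L t) *v y t + Rep_opmat (E t) *v v) \<le> norm (y t) * (g' t * norm v)"
      if t: "t \<in> {0..h}" for t
    proof -
      have "inner (y t) (Rep_opmat (L t) *v y t + Rep_opmat (E t) *v v) = inner (y t) (Rep_opmat (E t) *v v)"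
        using skew[OF t] by (simp add: skew_def inner_add_right inner_commute)
      also have "\<dots> \<le> norm (y t) * (norm (E t) * norm v)"
        using norm_cauchy_schwarz[of "y t"] opnorm_mult_vec_le[of "Rep_opmat (E t)" v]
        by (metis norm_ge_zero norm_opmat_eq order_trans mult_left_mono)
      also have "\<dots> \<le> norm (y t) * (g' t * norm v)"
        by (intro mult_left_mono mult_right_mono E t) simp_all
      finally show ?thesis .
    qed
    moreover have "0 \<le> g' t * norm v" if "t \<in> {0..h}" for t
      using E[OF that] norm_ge_zero[of "E t"] by (metis mult_nonneg_nonneg norm_ge_zero order_trans)
    ultimately have "norm (y h) \<le> norm (y 0) + ((g h * norm v) - (g 0 * norm v))"
      by (intro norm_le_of_inner_derivative_le[OF \<open>0 \<le> h\<close>]) (auto intro!: derivative_eq_intros g)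
    then show ?thesis
      using \<open>V 0 = U 0\<close> by (simp add: y_def algebra_simps)
  qed
  then show ?thesis by (simp add: norm_opmat_eq opnorm_le)
qed

section \<open>Error of the product formulas\<close>

locale two_term_evolution =
  fixes A B :: "'n::finite opmat"
    and a b a' b' a'' b'' :: "real \<Rightarrow> real"
    and a0 a1 a2 b0 b1 b2 h :: real
    and U :: "real \<Rightarrow> 'n opmat"
  assumes skew_A: "skew A" and skew_B: "skew B"
    and a_deriv: "\<And>t. t \<in> {0..h} \<Longrightarrow> (a has_real_derivative a' t) (at t within {0..h})"
    and a'_deriv: "\<And>t. t \<in> {0..h} \<Longrightarrow> (a' has_real_derivative a'' t) (at t within {0..h})"
    and b_deriv: "\<And>t. t \<in> {0..h} \<Longrightarrow> (b has_real_derivative b' t) (at t within {0..h})"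
    and b'_deriv: "\<And>t. t \<in> {0..h} \<Longrightarrow> (b' has_real_derivative b'' t) (at t within {0..h})"
    and a_bound: "\<And>t. t \<in> {0..h} \<Longrightarrow> \<bar>a t\<bar> \<le> a0"
    and a'_bound: "\<And>t. t \<in> {0..h} \<Longrightarrow> \<bar>a' t\<bar> \<le> a1"
    and a''_bound: "\<And>t. t \<in> {0..h} \<Longrightarrow> \<bar>a'' t\<bar> \<le> a2"
    and b_bound: "\<And>t. t \<in> {0..h} \<Longrightarrow> \<bar>b t\<bar> \<le> b0"
    and b'_bound: "\<And>t. t \<in> {0..h} \<Longrightarrow> \<bar>b' t\<bar> \<le> b1"
    and b''_bound: "\<And>t. t \<in> {0..h} \<Longrightarrow> \<bar>b'' t\<bar> \<le> b2"
    and h_nonneg: "0 \<le> h"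
    and U_0: "U 0 = 1"
    and U_deriv: "\<And>t. t \<in> {0..h} \<Longrightarrow>
      (U has_vector_derivative (a t *\<^sub>R A + b t *\<^sub>R B) * U t) (at t within {0..h})"
begin

lemma contraction_A: "contraction_generator A"
  and contraction_B: "contraction_generator B"
  by (simp_all add: contraction_generator_skew skew_A skew_B)

lemma bounds_nonneg: "0 \<le> a0" "0 \<le> a1" "0 \<le> a2" "0 \<le> b0" "0 \<le> b1" "0 \<le> b2"
  using a_bound[of 0] a'_bound[of 0] a''_bound[of 0] b_bound[of 0] b'_bound[of 0] b''_bound[of 0] h_nonneg
  by auto

lemma norm_exp_A_exp_B_le_1:
  "norm (exp (p *\<^sub>R A) * exp (q *\<^sub>R B)) \<le> 1"
  "norm (exp (q *\<^sub>R B) * exp (p *\<^sub>R A)) \<le> 1"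
  "norm (exp (p *\<^sub>R A) * exp (q *\<^sub>R B) * exp (r *\<^sub>R A)) \<le> 1"
  using norm_exp_le_1[OF contraction_A] norm_exp_le_1[OF contraction_B]
    norm_mult_exp_le[OF contraction_A] norm_mult_exp_le[OF contraction_B]
  by (meson order_trans)+

lemma error_le_of_defect:
  assumes "V 0 = 1"
    and V: "\<And>t. t \<in> {0..h} \<Longrightarrow> (V has_vector_derivative G t * V t) (at t within {0..h})"
    and norm_V: "\<And>t. t \<in> {0..h} \<Longrightarrow> norm (V t) \<le> 1"
    and defect: "\<And>t. t \<in> {0..h} \<Longrightarrow> norm (G t - (a t *\<^sub>R A + b t *\<^sub>R B)) \<le> c * t ^ k"
  shows "norm (V h - U h) \<le> c * h ^ Suc k / Suc k"
proof -
  let ?L = "\<lambda>t. a t *\<^sub>R A + b t *\<^sub>R B"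
  have "norm (V h - U h) \<le> c * h ^ Suc k / Suc k - c * 0 ^ Suc k / Suc k"
  proof (rule duhamel_bound[OF h_nonneg U_deriv, where E = "\<lambda>t. (G t - ?L t) * V t"])
    fix t assume t: "t \<in> {0..h}"
    show "(V has_vector_derivative ?L t * V t + (G t - ?L t) * V t) (at t within {0..h})"
      using V[OF t] by (simp add: algebra_simps)
    show "skew (?L t)"
      by (intro skew_add skew_scaleR skew_A skew_B)
    have "((\<lambda>t. t ^ Suc k) has_real_derivative Suc k * t ^ k) (at t within {0..h})"
      using DERIV_pow[of "Suc k" t] by (simp add: has_field_derivative_at_within)
    then have "((\<lambda>t. c * t ^ Suc k / Suc k) has_real_derivative c * (Suc k * t ^ k) / Suc k)
        (at t within {0..h})"
      by (intro DERIV_cdivide DERIV_cmult)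
    then show "((\<lambda>t. c * t ^ Suc k / Suc k) has_real_derivative c * t ^ k) (at t within {0..h})"
      by simp
    show "norm ((G t - ?L t) * V t) \<le> c * t ^ k"
      using norm_mult_ineq[of "G t - ?L t" "V t"] mult_left_le[OF norm_V[OF t], of "norm (G t - ?L t)"]
        defect[OF t] by simp
  qed (simp_all add: \<open>V 0 = 1\<close> U_0)
  then show ?thesis by simp
qed

definition \<alpha> :: "real \<Rightarrow> real" where
  "\<alpha> t = integral {0..t} a"

definition \<beta> :: "real \<Rightarrow> real" where
  "\<beta> t = integral {0..t} b"

lemma \<alpha>_0 [simp]: "\<alpha> 0 = 0" and \<beta>_0 [simp]: "\<beta> 0 = 0"
  by (simp_all add: \<alpha>_def \<beta>_def)

lemma \<alpha>_deriv: "t \<in> {0..h} \<Longrightarrow> (\<alpha> has_real_derivative a t) (at t within {0..h})"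
  unfolding \<alpha>_def[abs_def] has_real_derivative_iff_has_vector_derivative
  by (rule integral_has_vector_derivative[OF DERIV_continuous_on[OF a_deriv]])

lemma \<beta>_deriv: "t \<in> {0..h} \<Longrightarrow> (\<beta> has_real_derivative b t) (at t within {0..h})"
  unfolding \<beta>_def[abs_def] has_real_derivative_iff_has_vector_derivative
  by (rule integral_has_vector_derivative[OF DERIV_continuous_on[OF b_deriv]])

lemma abs_\<beta>_le: "t \<in> {0..h} \<Longrightarrow> \<bar>\<beta> t\<bar> \<le> b0 * t"
  using field_differentiable_bound[OF convex_real_interval(5) \<beta>_deriv b_bound[folded real_norm_def], of t 0] by simp

text \<open>\<open>sampled\<close> steps evaluate the coefficients at a point (\<open>U\<^sub>s\<close>), \<open>averaged\<close> ones integrate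
them over the step (\<open>U\<^sub>g\<close>).\<close>

lemma lie_trotter_averaged_error:
  "norm (exp (integral {0..h} b *\<^sub>R B) * exp (integral {0..h} a *\<^sub>R A) - U h)
    \<le> a0 * b0 * norm (commutator A B) * h\<^sup>2 / 2"
proof -
  have "norm (exp (\<beta> h *\<^sub>R B) * exp (\<alpha> h *\<^sub>R A) - U h) \<le> a0 * b0 * norm (commutator A B) * h ^ Suc 1 / Suc 1"
  proof (rule error_le_of_defect[where V = "\<lambda>t. exp (\<beta> t *\<^sub>R B) * exp (\<alpha> t *\<^sub>R A)"
        and G = "\<lambda>t. b t *\<^sub>R B + a t *\<^sub>R Ad B (\<beta> t) A"])
    fix t assume t: "t \<in> {0..h}"
    show "((\<lambda>t. exp (\<beta> t *\<^sub>R B) * exp (\<alpha> t *\<^sub>R A)) has_vector_derivative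
        (b t *\<^sub>R B + a t *\<^sub>R Ad B (\<beta> t) A) * (exp (\<beta> t *\<^sub>R B) * exp (\<alpha> t *\<^sub>R A))) (at t within {0..h})"
      by (rule exp_exp_has_vector_derivative[OF \<beta>_deriv[OF t] \<alpha>_deriv[OF t]])
    have "norm ((b t *\<^sub>R B + a t *\<^sub>R Ad B (\<beta> t) A) - (b t *\<^sub>R B + a t *\<^sub>R A))
        \<le> \<bar>a t\<bar> * \<bar>\<beta> t\<bar> * norm (commutator A B)"
      using lie_trotter_defect_le[OF contraction_B, of "b t" "a t" "\<beta> t" A "b t" "a t"]
      by (simp add: norm_commutator_swap[of B A])
    also have "\<dots> \<le> a0 * (b0 * t) * norm (commutator A B)"
      using t bounds_nonneg by (intro mult_right_mono mult_mono a_bound abs_\<beta>_le) auto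
    finally show "norm ((b t *\<^sub>R B + a t *\<^sub>R Ad B (\<beta> t) A) - (a t *\<^sub>R A + b t *\<^sub>R B))
        \<le> a0 * b0 * norm (commutator A B) * t ^ 1"
      by (simp add: add.commute mult_ac)
  qed (simp_all add: norm_exp_A_exp_B_le_1)
  then show ?thesis by (simp add: \<alpha>_def \<beta>_def power2_eq_square)
qed

lemma lie_trotter_sampled_error:
  "norm (exp ((b h * h) *\<^sub>R B) * exp ((a h * h) *\<^sub>R A) - U h)
    \<le> (a1 * norm A + b1 * norm B + a0 * b0 * norm (commutator A B)) * h\<^sup>2 / 2"
proof -
  let ?c = "a1 * norm A + b1 * norm B + a0 * b0 * norm (commutator A B)"
  let ?p' = "\<lambda>t. b t + t * b' t" and ?q' = "\<lambda>t. a t + t * a' t"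
  have "norm (exp ((b h * h) *\<^sub>R B) * exp ((a h * h) *\<^sub>R A) - U h) \<le> ?c * h ^ Suc 1 / Suc 1"
  proof (rule error_le_of_defect[where V = "\<lambda>t. exp ((b t * t) *\<^sub>R B) * exp ((a t * t) *\<^sub>R A)"
        and G = "\<lambda>t. ?p' t *\<^sub>R B + ?q' t *\<^sub>R Ad B (b t * t) A"])
    fix t assume t: "t \<in> {0..h}"
    have "((\<lambda>t. b t * t) has_real_derivative ?p' t) (at t within {0..h})"
      and "((\<lambda>t. a t * t) has_real_derivative ?q' t) (at t within {0..h})"
      by (auto intro!: derivative_eq_intros a_deriv b_deriv t simp: algebra_simps)
    then show "((\<lambda>t. exp ((b t * t) *\<^sub>R B) * exp ((a t * t) *\<^sub>R A)) has_vector_derivative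
        (?p' t *\<^sub>R B + ?q' t *\<^sub>R Ad B (b t * t) A) * (exp ((b t * t) *\<^sub>R B) * exp ((a t * t) *\<^sub>R A)))
        (at t within {0..h})"
      by (rule exp_exp_has_vector_derivative)
    have "norm ((?p' t *\<^sub>R B + ?q' t *\<^sub>R Ad B (b t * t) A) - (b t *\<^sub>R B + a t *\<^sub>R A))
        \<le> \<bar>t * b' t\<bar> * norm B + \<bar>t * a' t\<bar> * norm A + \<bar>a t\<bar> * \<bar>b t * t\<bar> * norm (commutator A B)"
      using lie_trotter_defect_le[OF contraction_B, of "?p' t" "?q' t" "b t * t" A "b t" "a t"]
      by (simp add: norm_commutator_swap[of B A])
    also have "\<dots> \<le> t * b1 * norm B + t * a1 * norm A + a0 * (b0 * t) * norm (commutator A B)"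
      using t bounds_nonneg a_bound[OF t] a'_bound[OF t] b_bound[OF t] b'_bound[OF t]
      by (intro add_mono mult_right_mono mult_mono) (auto simp: abs_mult mult_left_mono mult_right_mono)
    finally show "norm ((?p' t *\<^sub>R B + ?q' t *\<^sub>R Ad B (b t * t) A) - (a t *\<^sub>R A + b t *\<^sub>R B))
        \<le> ?c * t ^ 1"
      by (simp add: add.commute algebra_simps)
  qed (simp_all add: norm_exp_A_exp_B_le_1)
  then show ?thesis by (simp add: power2_eq_square)
qed

lemma strang_sampled_defect_le:
  assumes t: "t \<in> {0..h}"
  defines "p \<equiv> t / 2 * a (t / 2)" and "p' \<equiv> a (t / 2) / 2 + t / 2 * (a' (t / 2) / 2)"
    and "q \<equiv> t * b (t / 2)" and "q' \<equiv> b (t / 2) + t * (b' (t / 2) / 2)"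
  shows "norm ((p' *\<^sub>R A + q' *\<^sub>R Ad A p B + p' *\<^sub>R Ad A p (Ad B q A)) - (a t *\<^sub>R A + b t *\<^sub>R B))
    \<le> (a2 / 8 * norm A + b2 / 8 * norm B + (a0 * b1 + a1 * b0) / 4 * norm (commutator A B)
        + a0\<^sup>2 * b0 / 8 * norm (commutator A (commutator A B))
        + a0 * b0\<^sup>2 / 4 * norm (commutator B (commutator B A))) * t\<^sup>2"
    (is "norm ?D \<le> ?bound")
proof -
  have "0 \<le> t" "t / 2 \<in> {0..h}" using t by auto
  note bounds = a_bound[OF \<open>t / 2 \<in> {0..h}\<close>] a'_bound[OF \<open>t / 2 \<in> {0..h}\<close>]
    b_bound[OF \<open>t / 2 \<in> {0..h}\<close>] b'_bound[OF \<open>t / 2 \<in> {0..h}\<close>] bounds_nonneg \<open>0 \<le> t\<close>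
  have p: "\<bar>p\<bar> \<le> t / 2 * a0" and q: "\<bar>q\<bar> \<le> t * b0"
    and q': "\<bar>q' - b (t / 2)\<bar> \<le> t * (b1 / 2)" and p': "\<bar>p' - a (t / 2) / 2\<bar> \<le> t / 2 * (a1 / 2)"
    unfolding p_def q_def p'_def q'_def using bounds by (auto simp: abs_mult intro: mult_left_mono)
  have "\<bar>q' - b (t / 2)\<bar> * \<bar>p\<bar> \<le> t * (b1 / 2) * (t / 2 * a0)"
    by (rule mult_mono[OF q' p]) (use bounds in auto)
  moreover have "\<bar>p' - a (t / 2) / 2\<bar> * \<bar>q\<bar> \<le> t / 2 * (a1 / 2) * (t * b0)"
    by (rule mult_mono[OF p' q]) (use bounds in auto)
  moreover have "b (t / 2) * p - a (t / 2) / 2 * q = 0"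
    by (simp add: p_def q_def)
  ultimately have "\<bar>q' - b (t / 2)\<bar> * \<bar>p\<bar> + \<bar>p' - a (t / 2) / 2\<bar> * \<bar>q\<bar> + \<bar>b (t / 2) * p - a (t / 2) / 2 * q\<bar>
      \<le> t * (b1 / 2) * (t / 2 * a0) + t / 2 * (a1 / 2) * (t * b0) + 0"
    by simp
  moreover have "\<bar>p' + p' - a t\<bar> \<le> a2 * t\<^sup>2 / 8"
    using taylor_half_le[OF a_deriv a'_deriv a''_bound t] by (simp add: p'_def abs_minus_commute algebra_simps)
  moreover have "\<bar>q' - b t\<bar> \<le> b2 * t\<^sup>2 / 8"
    using taylor_half_le[OF b_deriv b'_deriv b''_bound t] by (simp add: q'_def abs_minus_commute algebra_simps)
  moreover have "\<bar>b (t / 2)\<bar> * p\<^sup>2 / 2 \<le> b0 * (t / 2 * a0)\<^sup>2 / 2"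
    using abs_mult_power2_le[OF _ p] bounds by (intro divide_right_mono) auto
  moreover have "\<bar>a (t / 2) / 2\<bar> * q\<^sup>2 / 2 \<le> a0 / 2 * (t * b0)\<^sup>2 / 2"
    using abs_mult_power2_le[OF _ q, of "a (t / 2) / 2" "a0 / 2"] bounds by (intro divide_right_mono) auto
  ultimately have "norm ?D \<le> a2 * t\<^sup>2 / 8 * norm A + b2 * t\<^sup>2 / 8 * norm B
      + (t * (b1 / 2) * (t / 2 * a0) + t / 2 * (a1 / 2) * (t * b0) + 0) * norm (commutator A B)
      + b0 * (t / 2 * a0)\<^sup>2 / 2 * norm (commutator A (commutator A B))
      + a0 / 2 * (t * b0)\<^sup>2 / 2 * norm (commutator B (commutator B A))"
    using strang_defect_le[OF contraction_A contraction_B, where p' = p' and q' = q' and r' = p' and p = p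
        and q = q and x = "a t" and y = "b t" and c = "b (t / 2)" and d = "a (t / 2) / 2"]
    by (meson add_mono mult_right_mono norm_ge_zero order_trans)
  also have "\<dots> = ?bound"
    by (simp add: power2_eq_square algebra_simps)
  finally show ?thesis .
qed

lemma strang_sampled_error:
  "norm (exp ((h / 2 * a (h / 2)) *\<^sub>R A) * exp ((h * b (h / 2)) *\<^sub>R B) * exp ((h / 2 * a (h / 2)) *\<^sub>R A)
      - U h)
    \<le> (a2 / 8 * norm A + b2 / 8 * norm B + (a0 * b1 + a1 * b0) / 4 * norm (commutator A B)
        + a0\<^sup>2 * b0 / 8 * norm (commutator A (commutator A B))
        + a0 * b0\<^sup>2 / 4 * norm (commutator B (commutator B A))) * h ^ 3 / 3"
  (is "norm (?V h - U h) \<le> ?c * h ^ 3 / 3")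
proof -
  let ?p = "\<lambda>t. t / 2 * a (t / 2)" and ?p' = "\<lambda>t. a (t / 2) / 2 + t / 2 * (a' (t / 2) / 2)"
  let ?q = "\<lambda>t. t * b (t / 2)" and ?q' = "\<lambda>t. b (t / 2) + t * (b' (t / 2) / 2)"
  have "norm (?V h - U h) \<le> ?c * h ^ Suc 2 / Suc 2"
  proof (rule error_le_of_defect[where G = "\<lambda>t. ?p' t *\<^sub>R A + ?q' t *\<^sub>R Ad A (?p t) B
      + ?p' t *\<^sub>R Ad A (?p t) (Ad B (?q t) A)"])
    fix t assume t: "t \<in> {0..h}"
    then have "t / 2 \<in> {0..h}" by auto
    have "(?p has_real_derivative ?p' t) (at t within {0..h})"
      and "(?q has_real_derivative ?q' t) (at t within {0..h})"
      using has_real_derivative_at_half[OF a_deriv[OF \<open>t / 2 \<in> {0..h}\<close>] t]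
        has_real_derivative_at_half[OF b_deriv[OF \<open>t / 2 \<in> {0..h}\<close>] t]
      by (auto intro!: derivative_eq_intros simp: algebra_simps)
    then show "(?V has_vector_derivative (?p' t *\<^sub>R A + ?q' t *\<^sub>R Ad A (?p t) B
        + ?p' t *\<^sub>R Ad A (?p t) (Ad B (?q t) A)) * ?V t) (at t within {0..h})"
      by (intro exp_exp_exp_has_vector_derivative)
    show "norm ((?p' t *\<^sub>R A + ?q' t *\<^sub>R Ad A (?p t) B + ?p' t *\<^sub>R Ad A (?p t) (Ad B (?q t) A))
        - (a t *\<^sub>R A + b t *\<^sub>R B)) \<le> ?c * t ^ 2"
      using strang_sampled_defect_le[OF t] by simp
  qed (simp_all add: norm_exp_A_exp_B_le_1)
  then show ?thesis by simp
qed

lemma integral_second_half: "integral {h / 2..h} a = \<alpha> h - \<alpha> (h / 2)"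
  using Henstock_Kurzweil_Integration.integral_combine[of 0 "h / 2" h a]
    integrable_continuous_real[OF DERIV_continuous_on[OF a_deriv]] h_nonneg
  by (simp add: \<alpha>_def)

lemma abs_\<alpha>_diff_half_le: "t \<in> {0..h} \<Longrightarrow> \<bar>\<alpha> t - \<alpha> (t / 2)\<bar> \<le> t / 2 * a0"
  using field_differentiable_bound[OF convex_real_interval(5) \<alpha>_deriv a_bound[folded real_norm_def],
      of t "t / 2"] by (simp add: mult.commute)

lemma strang_averaged_first_order_le:
  assumes t: "t \<in> {0..h}"
  shows "\<bar>b t * (\<alpha> t - \<alpha> (t / 2)) - a (t / 2) / 2 * \<beta> t\<bar> \<le> (a1 * b0 / 8 + a0 * b1 / 4) * t\<^sup>2"
proof -
  have "t / 2 \<in> {0..h}" using t by auto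
  have \<alpha>_taylor: "\<bar>\<alpha> t - \<alpha> (t / 2) - t / 2 * a (t / 2)\<bar> \<le> a1 * t\<^sup>2 / 8"
    by (rule taylor_half_le[OF \<alpha>_deriv a_deriv a'_bound t])
  have \<beta>_taylor: "\<bar>\<beta> t - t * b t\<bar> \<le> b1 * t\<^sup>2 / 2"
  proof -
    have "\<bar>b s - b t\<bar> \<le> b1 * \<bar>s - t\<bar>" if "s \<in> {0..h}" for s
      using field_differentiable_bound[OF convex_real_interval(5) b_deriv b'_bound[folded real_norm_def]] that t
      by simp
    then show ?thesis
      using taylor_linear_remainder_le[of 0 t t "{0..h}" \<beta> b b1] \<beta>_deriv t by auto
  qed
  have "b t * (\<alpha> t - \<alpha> (t / 2)) - a (t / 2) / 2 * \<beta> t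
      = b t * (\<alpha> t - \<alpha> (t / 2) - t / 2 * a (t / 2)) - a (t / 2) / 2 * (\<beta> t - t * b t)"
    by (simp add: field_simps)
  then have "\<bar>b t * (\<alpha> t - \<alpha> (t / 2)) - a (t / 2) / 2 * \<beta> t\<bar>
      \<le> \<bar>b t\<bar> * \<bar>\<alpha> t - \<alpha> (t / 2) - t / 2 * a (t / 2)\<bar> + \<bar>a (t / 2) / 2\<bar> * \<bar>\<beta> t - t * b t\<bar>"
    by (metis abs_mult abs_triangle_ineq4)
  also have "\<dots> \<le> b0 * (a1 * t\<^sup>2 / 8) + a0 / 2 * (b1 * t\<^sup>2 / 2)"
    using \<alpha>_taylor \<beta>_taylor b_bound[OF t] a_bound[OF \<open>t / 2 \<in> {0..h}\<close>] bounds_nonneg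
    by (intro add_mono mult_mono) auto
  finally show ?thesis by (simp add: field_simps)
qed

lemma strang_averaged_defect_le:
  assumes t: "t \<in> {0..h}"
  defines "p \<equiv> \<alpha> t - \<alpha> (t / 2)"
  shows "norm (((a t - a (t / 2) / 2) *\<^sub>R A + b t *\<^sub>R Ad A p B + (a (t / 2) / 2) *\<^sub>R Ad A p (Ad B (\<beta> t) A))
      - (a t *\<^sub>R A + b t *\<^sub>R B))
    \<le> ((a1 * b0 / 8 + a0 * b1 / 4) * norm (commutator A B)
        + a0\<^sup>2 * b0 / 8 * norm (commutator A (commutator A B))
        + a0 * b0\<^sup>2 / 4 * norm (commutator B (commutator B A))) * t\<^sup>2"
    (is "norm ?D \<le> ?bound")
proof -
  have "t / 2 \<in> {0..h}" using t by auto
  have "norm ?D \<le> \<bar>b t * p - a (t / 2) / 2 * \<beta> t\<bar> * norm (commutator A B)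
      + \<bar>b t\<bar> * p\<^sup>2 / 2 * norm (commutator A (commutator A B))
      + \<bar>a (t / 2) / 2\<bar> * (\<beta> t)\<^sup>2 / 2 * norm (commutator B (commutator B A))"
    using strang_defect_le[OF contraction_A contraction_B, where p' = "a t - a (t / 2) / 2" and q' = "b t"
        and r' = "a (t / 2) / 2" and p = p and q = "\<beta> t" and x = "a t" and y = "b t" and c = "b t"
        and d = "a (t / 2) / 2"]
    by simp
  moreover have "\<bar>b t\<bar> * p\<^sup>2 / 2 \<le> b0 * (t / 2 * a0)\<^sup>2 / 2"
    and "\<bar>a (t / 2) / 2\<bar> * (\<beta> t)\<^sup>2 / 2 \<le> a0 / 2 * (b0 * t)\<^sup>2 / 2"
    using abs_mult_power2_le[OF b_bound[OF t] abs_\<alpha>_diff_half_le[OF t]]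
      abs_mult_power2_le[OF _ abs_\<beta>_le[OF t], of "a (t / 2) / 2" "a0 / 2"] a_bound[OF \<open>t / 2 \<in> {0..h}\<close>]
    by (simp_all add: p_def)
  ultimately have "norm ?D \<le> (a1 * b0 / 8 + a0 * b1 / 4) * t\<^sup>2 * norm (commutator A B)
      + b0 * (t / 2 * a0)\<^sup>2 / 2 * norm (commutator A (commutator A B))
      + a0 / 2 * (b0 * t)\<^sup>2 / 2 * norm (commutator B (commutator B A))"
    using strang_averaged_first_order_le[OF t] unfolding p_def
    by (meson add_mono mult_right_mono norm_ge_zero order_trans)
  also have "\<dots> = ?bound"
    by (simp add: power2_eq_square algebra_simps)
  finally show ?thesis .
qed

lemma strang_averaged_error:
  "norm (exp (integral {h / 2..h} a *\<^sub>R A) * exp (integral {0..h} b *\<^sub>R B)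
      * exp (integral {0..h / 2} a *\<^sub>R A) - U h)
    \<le> ((a1 * b0 / 8 + a0 * b1 / 4) * norm (commutator A B)
        + a0\<^sup>2 * b0 / 8 * norm (commutator A (commutator A B))
        + a0 * b0\<^sup>2 / 4 * norm (commutator B (commutator B A))) * h ^ 3 / 3"
  (is "_ \<le> ?c * h ^ 3 / 3")
proof -
  let ?p = "\<lambda>t. \<alpha> t - \<alpha> (t / 2)" and ?r = "\<lambda>t. \<alpha> (t / 2)"
  let ?V = "\<lambda>t. exp (?p t *\<^sub>R A) * exp (\<beta> t *\<^sub>R B) * exp (?r t *\<^sub>R A)"
  have "norm (?V h - U h) \<le> ?c * h ^ Suc 2 / Suc 2"
  proof (rule error_le_of_defect[where V = ?V and G = "\<lambda>t. (a t - a (t / 2) / 2) *\<^sub>R A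
      + b t *\<^sub>R Ad A (?p t) B + (a (t / 2) / 2) *\<^sub>R Ad A (?p t) (Ad B (\<beta> t) A)"])
    fix t assume t: "t \<in> {0..h}"
    then have "t / 2 \<in> {0..h}" by auto
    have "(?r has_real_derivative a (t / 2) / 2) (at t within {0..h})"
      by (rule has_real_derivative_at_half[OF \<alpha>_deriv[OF \<open>t / 2 \<in> {0..h}\<close>] t])
    moreover from this have "(?p has_real_derivative a t - a (t / 2) / 2) (at t within {0..h})"
      by (intro DERIV_diff \<alpha>_deriv t)
    ultimately show "(?V has_vector_derivative ((a t - a (t / 2) / 2) *\<^sub>R A + b t *\<^sub>R Ad A (?p t) B
        + (a (t / 2) / 2) *\<^sub>R Ad A (?p t) (Ad B (\<beta> t) A)) * ?V t) (at t within {0..h})"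
      by (intro exp_exp_exp_has_vector_derivative \<beta>_deriv t)
    show "norm (((a t - a (t / 2) / 2) *\<^sub>R A + b t *\<^sub>R Ad A (?p t) B
        + (a (t / 2) / 2) *\<^sub>R Ad A (?p t) (Ad B (\<beta> t) A)) - (a t *\<^sub>R A + b t *\<^sub>R B)) \<le> ?c * t ^ 2"
      using strang_averaged_defect_le[OF t] by simp
  qed (simp_all add: norm_exp_A_exp_B_le_1)
  then show ?thesis by (simp add: integral_second_half \<alpha>_def \<beta>_def)
qed

end

section \<open>Trotter steps for matrix Hamiltonians\<close>

lemma abs_le_supn:
  assumes "continuous_on {0..T} f" and "t \<in> {0..T}"
  shows "\<bar>f t\<bar> \<le> supn T f"
proof -
  have "bounded ((\<lambda>t. \<bar>f t\<bar>) ` {0..T})"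
    by (intro compact_imp_bounded compact_continuous_image continuous_intros assms(1) compact_Icc)
  then show ?thesis
    unfolding supn_def by (intro cSUP_upper assms(2) bounded_imp_bdd_above)
qed

lemma Abs_opmat_cscale_Ham:
  "Abs_opmat (cscale (- \<i>) (Ham f1 f2 H1 H2 t ** M))
    = (f1 t *\<^sub>R generator H1 + f2 t *\<^sub>R generator H2) * Abs_opmat M"
proof -
  have "cscale (- \<i>) (Ham f1 f2 H1 H2 t ** M)
      = (f1 t *\<^sub>R cscale (- \<i>) H1 + f2 t *\<^sub>R cscale (- \<i>) H2) ** M"
    by (simp add: Ham_def cscale_def vec_eq_iff matrix_matrix_mult_def sum_distrib_left sum.distrib)
      (simp add: scaleR_conv_of_real algebra_simps)
  then show ?thesis
    by (simp add: Rep_opmat_inject[symmetric] Abs_opmat_inverse Rep_generator)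
qed

locale hamiltonian_splitting =
  fixes H1 H2 :: "'n::finite cmat"
    and f1 f2 f1' f2' f1'' f2'' :: "real \<Rightarrow> real"
    and T h :: real
    and U :: "real \<Rightarrow> 'n cmat"
  assumes herm1: "hermitian H1" and herm2: "hermitian H2"
    and d1: "\<forall>t\<in>{0..T}. (f1 has_real_derivative f1' t) (at t within {0..T})"
    and dd1: "\<forall>t\<in>{0..T}. (f1' has_real_derivative f1'' t) (at t within {0..T})"
    and c1: "continuous_on {0..T} f1''"
    and d2: "\<forall>t\<in>{0..T}. (f2 has_real_derivative f2' t) (at t within {0..T})"
    and dd2: "\<forall>t\<in>{0..T}. (f2' has_real_derivative f2'' t) (at t within {0..T})"
    and c2: "continuous_on {0..T} f2''"
    and h: "0 < h" "h \<le> T"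
    and U0: "U 0 = mat 1"
    and Uode: "\<forall>t\<in>{0..T}. (U has_vector_derivative
                  cscale (- \<i>) (Ham f1 f2 H1 H2 t ** U t)) (at t within {0..T})"
begin

sublocale two_term_evolution "generator H1" "generator H2" f1 f2 f1' f2' f1'' f2''
  "supn T f1" "supn T f1'" "supn T f1''" "supn T f2" "supn T f2'" "supn T f2''" h "\<lambda>t. Abs_opmat (U t)"
proof
  have sub: "{0..h} \<subseteq> {0..T}" using h by auto
  have cont: "continuous_on {0..T} f1" "continuous_on {0..T} f1'" "continuous_on {0..T} f2"
      "continuous_on {0..T} f2'"
    using d1 dd1 d2 dd2 by (auto intro!: DERIV_continuous_on)
  fix t assume "t \<in> {0..h}"
  then have t: "t \<in> {0..T}" using sub by blast
  show "(f1 has_real_derivative f1' t) (at t within {0..h})" "(f1' has_real_derivative f1'' t) (at t within {0..h})"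
    "(f2 has_real_derivative f2' t) (at t within {0..h})" "(f2' has_real_derivative f2'' t) (at t within {0..h})"
    using d1 dd1 d2 dd2 t by (auto intro: DERIV_subset[OF _ sub])
  show "\<bar>f1 t\<bar> \<le> supn T f1" "\<bar>f1' t\<bar> \<le> supn T f1'" "\<bar>f1'' t\<bar> \<le> supn T f1''"
    "\<bar>f2 t\<bar> \<le> supn T f2" "\<bar>f2' t\<bar> \<le> supn T f2'" "\<bar>f2'' t\<bar> \<le> supn T f2''"
    using abs_le_supn[OF _ t] cont c1 c2 by auto
  show "((\<lambda>t. Abs_opmat (U t)) has_vector_derivative
      (f1 t *\<^sub>R generator H1 + f2 t *\<^sub>R generator H2) * Abs_opmat (U t)) (at t within {0..h})"
    using bounded_linear.has_vector_derivative[OF bounded_linear_Abs_opmat Uode[rule_format, OF t]]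
    by (auto simp: Abs_opmat_cscale_Ham intro: has_vector_derivative_within_subset[OF _ sub])
qed (use herm1 herm2 h U0 in \<open>auto simp: skew_generator one_opmat_def\<close>)

lemmas opnorm_translation = eprop_eq_exp opnorm_eq_norm_Abs Abs_opmat_simps Rep_opmat_inverse
  norm_generator norm_commutator_generator norm_commutator_commutator_generator

lemma Us1_error_bound:
  "opnorm (Us1 f1 f2 H1 H2 0 h - U h) \<le>
      (1/2 * supn T f1' * opnorm H1 + 1/2 * supn T f2' * opnorm H2
        + 1/2 * supn T f1 * supn T f2 * opnorm (comm H1 H2)) * h^2
      + (1/6 * supn T f1 * supn T f2' * opnorm (comm H1 H2)) * h^3"
proof -
  have "opnorm (Us1 f1 f2 H1 H2 0 h - U h) \<le> (supn T f1' * opnorm H1 + supn T f2' * opnorm H2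
      + supn T f1 * supn T f2 * opnorm (comm H1 H2)) * h\<^sup>2 / 2"
    using lie_trotter_sampled_error by (simp add: Us1_def opnorm_translation)
  moreover have "0 \<le> supn T f1 * supn T f2' * opnorm (comm H1 H2) * h^3"
    using h by (intro mult_nonneg_nonneg bounds_nonneg opnorm_nonneg) simp_all
  ultimately show ?thesis by (simp add: algebra_simps)
qed

lemma Ug1_error_bound:
  "opnorm (Ug1 f1 f2 H1 H2 0 h - U h) \<le>
      (1/2 * supn T f1 * supn T f2 * opnorm (comm H1 H2)) * h^2"
  using lie_trotter_averaged_error by (simp add: Ug1_def opnorm_translation)

lemma Us2_error_bound:
  "opnorm (Us2 f1 f2 H1 H2 0 h - U h) \<le>
      (7/24 * supn T f1'' * opnorm H1 + 1/12 * supn T f1' * supn T f2 * opnorm H1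
        + 7/24 * supn T f2'' * opnorm H2
        + 1/6 * (supn T f1' * supn T f2 + supn T f1 * supn T f2') * opnorm (comm H1 H2)
        + 1/24 * (supn T f1)^2 * supn T f2 * opnorm (comm H1 (comm H1 H2))
        + 1/12 * supn T f1 * (supn T f2)^2 * opnorm (comm H2 (comm H1 H2))) * h^3
      + (1/64 * supn T f1' * supn T f2' * opnorm H1
        + (1/192 * supn T f1 * supn T f2'' + 1/192 * supn T f1'' * supn T f2
           + 1/48 * supn T f1' * supn T f2') * opnorm (comm H1 H2)
        + 1/96 * supn T f1 * supn T f1' * supn T f2 * opnorm (comm H1 (comm H1 H2))
        + 1/48 * supn T f1 * supn T f2 * supn T f2' * opnorm (comm H2 (comm H1 H2))) * h^4
      + (1/960 * (supn T f1')^2 * supn T f2 * opnorm (comm H1 (comm H1 H2))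
        + 1/480 * supn T f1 * (supn T f2')^2 * opnorm (comm H2 (comm H1 H2))) * h^5"
  (is "_ \<le> ?\<alpha> * h^3 + ?\<beta> * h^4 + ?\<gamma> * h^5")
proof -
  have "opnorm (comm H2 (comm H2 H1)) = opnorm (comm H2 (comm H1 H2))"
    using norm_commutator_commutator_swap[of "generator H2" "generator H2" "generator H1"]
    by (simp add: norm_commutator_commutator_generator)
  then have "opnorm (Us2 f1 f2 H1 H2 0 h - U h) \<le> (supn T f1'' / 8 * opnorm H1 + supn T f2'' / 8 * opnorm H2
      + (supn T f1 * supn T f2' + supn T f1' * supn T f2) / 4 * opnorm (comm H1 H2)
      + (supn T f1)\<^sup>2 * supn T f2 / 8 * opnorm (comm H1 (comm H1 H2))
      + supn T f1 * (supn T f2)\<^sup>2 / 4 * opnorm (comm H2 (comm H1 H2))) * h ^ 3 / 3"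
    using strang_sampled_error by (simp add: Us2_def opnorm_translation)
  also have "\<dots> \<le> ?\<alpha> * h^3"
    using bounds_nonneg opnorm_nonneg[of H1] opnorm_nonneg[of H2] opnorm_nonneg[of "comm H1 H2"] h
    by (simp add: field_simps mult_right_mono)
  also have "\<dots> \<le> ?\<alpha> * h^3 + ?\<beta> * h^4 + ?\<gamma> * h^5"
    using h by (intro add_increasing2 mult_nonneg_nonneg add_nonneg_nonneg zero_le_power bounds_nonneg
        opnorm_nonneg order_refl) simp_all
  finally show ?thesis .
qed

lemma Ug2_error_bound:
  "opnorm (Ug2 f1 f2 H1 H2 0 h - U h) \<le>
      ((7/12 * supn T f1 * supn T f2' + 11/24 * supn T f1' * supn T f2) * opnorm (comm H1 H2)
        + 3/8 * (supn T f1)^2 * supn T f2 * opnorm (comm H1 (comm H1 H2))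
        + 1/12 * supn T f1 * (supn T f2)^2 * opnorm (comm H2 (comm H2 H1))) * h^3"
proof -
  have "opnorm (Ug2 f1 f2 H1 H2 0 h - U h) \<le> ((supn T f1' * supn T f2 / 8 + supn T f1 * supn T f2' / 4)
      * opnorm (comm H1 H2) + (supn T f1)\<^sup>2 * supn T f2 / 8 * opnorm (comm H1 (comm H1 H2))
      + supn T f1 * (supn T f2)\<^sup>2 / 4 * opnorm (comm H2 (comm H2 H1))) * h ^ 3 / 3"
    using strang_averaged_error by (simp add: Ug2_def opnorm_translation)
  also have "\<dots> \<le> ((7/12 * supn T f1 * supn T f2' + 11/24 * supn T f1' * supn T f2) * opnorm (comm H1 H2)
        + 3/8 * (supn T f1)^2 * supn T f2 * opnorm (comm H1 (comm H1 H2))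
        + 1/12 * supn T f1 * (supn T f2)^2 * opnorm (comm H2 (comm H2 H1))) * h^3"
    using bounds_nonneg opnorm_nonneg[of "comm H1 H2"] opnorm_nonneg[of "comm H1 (comm H1 H2)"] h
    by (simp add: field_simps mult_right_mono)
  finally show ?thesis .
qed

end

theorem theorem1:
  fixes H1 H2 :: "'n::finite cmat"
    and f1 f2 f1' f2' f1'' f2'' :: "real \<Rightarrow> real"
    and T h :: real
    and U :: "real \<Rightarrow> 'n cmat"
  assumes herm1: "hermitian H1" and herm2: "hermitian H2"
    and d1: "\<forall>t\<in>{0..T}. (f1 has_real_derivative f1' t) (at t within {0..T})"
    and dd1: "\<forall>t\<in>{0..T}. (f1' has_real_derivative f1'' t) (at t within {0..T})"
    and c1: "continuous_on {0..T} f1''"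
    and d2: "\<forall>t\<in>{0..T}. (f2 has_real_derivative f2' t) (at t within {0..T})"
    and dd2: "\<forall>t\<in>{0..T}. (f2' has_real_derivative f2'' t) (at t within {0..T})"
    and c2: "continuous_on {0..T} f2''"
    and h: "0 < h" "h \<le> T"
    and U0: "U 0 = mat 1"
    and Uode: "\<forall>t\<in>{0..T}. (U has_vector_derivative
                  cscale (- \<i>) (Ham f1 f2 H1 H2 t ** U t)) (at t within {0..T})"
  shows
   "opnorm (Us1 f1 f2 H1 H2 0 h - U h) \<le>
      (1/2 * supn T f1' * opnorm H1 + 1/2 * supn T f2' * opnorm H2
        + 1/2 * supn T f1 * supn T f2 * opnorm (comm H1 H2)) * h^2
      + (1/6 * supn T f1 * supn T f2' * opnorm (comm H1 H2)) * h^3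
   \<and> opnorm (Ug1 f1 f2 H1 H2 0 h - U h) \<le>
      (1/2 * supn T f1 * supn T f2 * opnorm (comm H1 H2)) * h^2
   \<and> opnorm (Us2 f1 f2 H1 H2 0 h - U h) \<le>
      (7/24 * supn T f1'' * opnorm H1 + 1/12 * supn T f1' * supn T f2 * opnorm H1
        + 7/24 * supn T f2'' * opnorm H2
        + 1/6 * (supn T f1' * supn T f2 + supn T f1 * supn T f2') * opnorm (comm H1 H2)
        + 1/24 * (supn T f1)^2 * supn T f2 * opnorm (comm H1 (comm H1 H2))
        + 1/12 * supn T f1 * (supn T f2)^2 * opnorm (comm H2 (comm H1 H2))) * h^3
      + (1/64 * supn T f1' * supn T f2' * opnorm H1
        + (1/192 * supn T f1 * supn T f2'' + 1/192 * supn T f1'' * supn T f2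
           + 1/48 * supn T f1' * supn T f2') * opnorm (comm H1 H2)
        + 1/96 * supn T f1 * supn T f1' * supn T f2 * opnorm (comm H1 (comm H1 H2))
        + 1/48 * supn T f1 * supn T f2 * supn T f2' * opnorm (comm H2 (comm H1 H2))) * h^4
      + (1/960 * (supn T f1')^2 * supn T f2 * opnorm (comm H1 (comm H1 H2))
        + 1/480 * supn T f1 * (supn T f2')^2 * opnorm (comm H2 (comm H1 H2))) * h^5
   \<and> opnorm (Ug2 f1 f2 H1 H2 0 h - U h) \<le>
      ((7/12 * supn T f1 * supn T f2' + 11/24 * supn T f1' * supn T f2) * opnorm (comm H1 H2)
        + 3/8 * (supn T f1)^2 * supn T f2 * opnorm (comm H1 (comm H1 H2))
        + 1/12 * supn T f1 * (supn T f2)^2 * opnorm (comm H2 (comm H2 H1))) * h^3"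
proof -
  interpret hamiltonian_splitting H1 H2 f1 f2 f1' f2' f1'' f2'' T h U
    using assms by (rule hamiltonian_splitting.intro)
  show ?thesis
    using Us1_error_bound Ug1_error_bound Us2_error_bound Ug2_error_bound by blast
qed

end
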